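(* Every semi-decomposable first-order theory $T$ is pseudo decomposable.
   Context: A first-order theory $T$ is pseudo decomposable if for every $n<\omega$ there are a model $M$ of $T$, a partition of the universe of $M$ into nonempty sets $A_0,\dots,A_{n-1}$, and automorphisms $f^1_i\neq f^2_i$ of $M$ ($i<n$) such that $f^1_i\restriction(M\setminus A_i)=f^2_i\restriction(M\setminus A_i)$ and for every choice $\eta(i)\in\{1,2\}$ ($i<n$) the map $\bigcup_{i<n}(f^{\eta(i)}_i\restriction A_i)$ is an automorphism of $M$. $T$ is semi-decomposable if for every $n<\omega$ there are a model $M$ of $T$ and a partition $\langle A_\ell:\ell<n\rangle$ of the universe of $M$ into infinite sets such that for every finite set $\Delta_1$ of formulas of $L(\tau_T)$ there is a finite set $\Delta_2$ of formulas of $L(\tau_T)$ with the following property: whenever for each $\ell<n$, $k_\ell<\omega$ and $\bar a_\ell,\bar b_\ell\in{}^{k_\ell}(A_\ell)$ realize the same $\Delta_2$-type in $M$, and $\bar a_0=\bar b_0$, then $\bar a_0\frown\bar a_1\frown\cdots\frown\bar a_{n-1}$ and $\bar b_0\frown\bar b_1\frown\cdots\frown\bar b_{n-1}$ realize the same $\Delta_1$-type in $M$. *)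

theory Defs
  imports Main
begin

datatype 'f trm = Var nat | Fn 'f "'f trm list"

datatype ('f, 'r) fm =
    Eq "'f trm" "'f trm"
  | Rel 'r "'f trm list"
  | Neg "('f, 'r) fm"
  | Conj "('f, 'r) fm" "('f, 'r) fm"
  | Ex nat "('f, 'r) fm"

fun wf_trm :: "('f \<Rightarrow> nat) \<Rightarrow> 'f trm \<Rightarrow> bool" where
  "wf_trm arf (Var n) = True"
| "wf_trm arf (Fn f ts) = (length ts = arf f \<and> (\<forall>t \<in> set ts. wf_trm arf t))"

fun wf_fm :: "('f \<Rightarrow> nat) \<Rightarrow> ('r \<Rightarrow> nat) \<Rightarrow> ('f, 'r) fm \<Rightarrow> bool" where
  "wf_fm arf arr (Eq s t) = (wf_trm arf s \<and> wf_trm arf t)"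
| "wf_fm arf arr (Rel r ts) = (length ts = arr r \<and> (\<forall>t \<in> set ts. wf_trm arf t))"
| "wf_fm arf arr (Neg p) = wf_fm arf arr p"
| "wf_fm arf arr (Conj p q) = (wf_fm arf arr p \<and> wf_fm arf arr q)"
| "wf_fm arf arr (Ex x p) = wf_fm arf arr p"

fun fv_trm :: "'f trm \<Rightarrow> nat set" where
  "fv_trm (Var n) = {n}"
| "fv_trm (Fn f ts) = (\<Union>t \<in> set ts. fv_trm t)"

fun fv :: "('f, 'r) fm \<Rightarrow> nat set" where
  "fv (Eq s t) = fv_trm s \<union> fv_trm t"
| "fv (Rel r ts) = (\<Union>t \<in> set ts. fv_trm t)"
| "fv (Neg p) = fv p"
| "fv (Conj p q) = fv p \<union> fv q"
| "fv (Ex x p) = fv p - {x}"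

record ('a, 'f, 'r) struct =
  dom :: "'a set"
  fnI :: "'f \<Rightarrow> 'a list \<Rightarrow> 'a"
  relI :: "'r \<Rightarrow> 'a list \<Rightarrow> bool"

fun eval :: "('a, 'f, 'r) struct \<Rightarrow> (nat \<Rightarrow> 'a) \<Rightarrow> 'f trm \<Rightarrow> 'a" where
  "eval M e (Var n) = e n"
| "eval M e (Fn f ts) = fnI M f (map (eval M e) ts)"

fun sat :: "('a, 'f, 'r) struct \<Rightarrow> (nat \<Rightarrow> 'a) \<Rightarrow> ('f, 'r) fm \<Rightarrow> bool" where
  "sat M e (Eq s t) = (eval M e s = eval M e t)"
| "sat M e (Rel r ts) = relI M r (map (eval M e) ts)"
| "sat M e (Neg p) = (\<not> sat M e p)"
| "sat M e (Conj p q) = (sat M e p \<and> sat M e q)"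
| "sat M e (Ex x p) = (\<exists>a \<in> dom M. sat M (e(x := a)) p)"

definition is_structure :: "('f \<Rightarrow> nat) \<Rightarrow> ('a, 'f, 'r) struct \<Rightarrow> bool" where
  "is_structure arf M \<longleftrightarrow> dom M \<noteq> {} \<and>
     (\<forall>f as. length as = arf f \<and> set as \<subseteq> dom M \<longrightarrow> fnI M f as \<in> dom M)"

definition sentence :: "('f \<Rightarrow> nat) \<Rightarrow> ('r \<Rightarrow> nat) \<Rightarrow> ('f, 'r) fm \<Rightarrow> bool" where
  "sentence arf arr p \<longleftrightarrow> wf_fm arf arr p \<and> fv p = {}"

definition fo_theory :: "('f \<Rightarrow> nat) \<Rightarrow> ('r \<Rightarrow> nat) \<Rightarrow> ('f, 'r) fm set \<Rightarrow> bool" where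
  "fo_theory arf arr T \<longleftrightarrow> (\<forall>p \<in> T. sentence arf arr p)"

definition is_model :: "('f \<Rightarrow> nat) \<Rightarrow> ('r \<Rightarrow> nat) \<Rightarrow> ('f, 'r) fm set
    \<Rightarrow> ('a, 'f, 'r) struct \<Rightarrow> bool" where
  "is_model arf arr T M \<longleftrightarrow> is_structure arf M \<and>
     (\<forall>p \<in> T. \<forall>e. range e \<subseteq> dom M \<longrightarrow> sat M e p)"

definition automorphism :: "('f \<Rightarrow> nat) \<Rightarrow> ('r \<Rightarrow> nat) \<Rightarrow> ('a, 'f, 'r) struct
    \<Rightarrow> ('a \<Rightarrow> 'a) \<Rightarrow> bool" where
  "automorphism arf arr M h \<longleftrightarrow> bij_betw h (dom M) (dom M) \<and>
     (\<forall>f as. length as = arf f \<and> set as \<subseteq> dom M \<longrightarrow> h (fnI M f as) = fnI M f (map h as)) \<and>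
     (\<forall>r as. length as = arr r \<and> set as \<subseteq> dom M \<longrightarrow> (relI M r as \<longleftrightarrow> relI M r (map h as)))"

definition is_partition :: "('a, 'f, 'r) struct \<Rightarrow> nat \<Rightarrow> (nat \<Rightarrow> 'a set) \<Rightarrow> bool" where
  "is_partition M n A \<longleftrightarrow> (\<Union>i<n. A i) = dom M \<and>
     (\<forall>i<n. \<forall>j<n. i \<noteq> j \<longrightarrow> A i \<inter> A j = {})"

definition same_type :: "('a, 'f, 'r) struct \<Rightarrow> ('f, 'r) fm set \<Rightarrow> 'a list \<Rightarrow> 'a list \<Rightarrow> bool" where
  "same_type M \<Delta> a b \<longleftrightarrow> length a = length b \<and>
     (\<forall>p \<in> \<Delta>. fv p \<subseteq> {..<length a} \<longrightarrow> (sat M (\<lambda>i. a ! i) p \<longleftrightarrow> sat M (\<lambda>i. b ! i) p))"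

definition glue :: "nat \<Rightarrow> (nat \<Rightarrow> 'a set) \<Rightarrow> (nat \<Rightarrow> 'a \<Rightarrow> 'a) \<Rightarrow> (nat \<Rightarrow> 'a \<Rightarrow> 'a)
    \<Rightarrow> nat set \<Rightarrow> 'a \<Rightarrow> 'a" where
  "glue n A f1 f2 S x =
     (if \<exists>i<n. x \<in> A i then
        (let i = (THE i. i < n \<and> x \<in> A i) in if i \<in> S then f2 i x else f1 i x)
      else x)"

text \<open>Models are taken with universe inside the type 'a (given by the itself argument).\<close>
definition pseudo_decomposable :: "'a itself \<Rightarrow> ('f \<Rightarrow> nat) \<Rightarrow> ('r \<Rightarrow> nat)
    \<Rightarrow> ('f, 'r) fm set \<Rightarrow> bool" where
  "pseudo_decomposable _ arf arr T \<longleftrightarrow>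
    (\<forall>n \<ge> 1. \<exists>(M :: ('a, 'f, 'r) struct) A f1 f2.
       is_model arf arr T M \<and> is_partition M n A \<and> (\<forall>i<n. A i \<noteq> {}) \<and>
       (\<forall>i<n. automorphism arf arr M (f1 i) \<and> automorphism arf arr M (f2 i) \<and>
              (\<exists>x \<in> dom M. f1 i x \<noteq> f2 i x) \<and>
              (\<forall>x \<in> dom M - A i. f1 i x = f2 i x)) \<and>
       (\<forall>S. automorphism arf arr M (glue n A f1 f2 S)))"

definition semi_decomposable :: "'a itself \<Rightarrow> ('f \<Rightarrow> nat) \<Rightarrow> ('r \<Rightarrow> nat)
    \<Rightarrow> ('f, 'r) fm set \<Rightarrow> bool" where
  "semi_decomposable _ arf arr T \<longleftrightarrow>
    (\<forall>n \<ge> 1. \<exists>(M :: ('a, 'f, 'r) struct) A.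
       is_model arf arr T M \<and> is_partition M n A \<and> (\<forall>i<n. infinite (A i)) \<and>
       (\<forall>\<Delta>1. finite \<Delta>1 \<and> (\<forall>p \<in> \<Delta>1. wf_fm arf arr p) \<longrightarrow>
          (\<exists>\<Delta>2. finite \<Delta>2 \<and> (\<forall>p \<in> \<Delta>2. wf_fm arf arr p) \<and>
             (\<forall>a b :: nat \<Rightarrow> 'a list.
                (\<forall>l<n. set (a l) \<subseteq> A l \<and> set (b l) \<subseteq> A l \<and> same_type M \<Delta>2 (a l) (b l))
                \<and> a 0 = b 0
                \<longrightarrow> same_type M \<Delta>1 (concat (map a [0..<n])) (concat (map b [0..<n]))))))"

end

theory Submission
  imports Defs "HOL-Library.Ramsey" "HOL-Library.Nat_Bijection"
begin

text \<open>Fix \<open>n \<ge> 1\<close> and take a semi-decomposition of a model \<open>M\<close> of \<open>T\<close> into \<open>n + 1\<close>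
  pieces \<open>A\<^sub>0, \<dots>, A\<^sub>n\<close>, where \<open>A\<^sub>0\<close> is the piece that stays fixed. Choose
  injective sequences inside \<open>A\<^sub>1, \<dots>, A\<^sub>n\<close>. By Ramsey's theorem they have, for every
  finite set of formulas of the Skolemised language, subsequences indiscernible for these
  formulas; an ultraproduct over the finite sets of formulas turns them into
  \<open>\<int>\<close>-indexed sequences indiscernible for all formulas. Their Skolem hull \<open>H\<close> is an
  elementary substructure, hence a model of \<open>T\<close>, and the shift \<open>q \<mapsto> q + 1\<close> of all
  sequences induces an automorphism of \<open>H\<close> preserving each piece.

  By Los's theorem \<open>H\<close> inherits the semi-decomposition. Applying the shift on the pieces
  \<open>A\<^sub>j\<close> with \<open>j \<in> S\<close> and the identity elsewhere preserves the type of each piece of a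
  tuple and fixes its part in \<open>A\<^sub>0\<close>, hence preserves the type of the whole tuple: each
  such partial shift is an automorphism of \<open>H\<close>. Merging \<open>A\<^sub>0\<close> into \<open>A\<^sub>1\<close> yields \<open>n\<close>
  blocks with \<open>f\<^sup>1\<^sub>i = id\<close> and \<open>f\<^sup>2\<^sub>i\<close> the shift on block \<open>i\<close>. Finally \<open>H\<close> is
  copied into the type \<open>'b\<close> along an injective coding of its elements by Skolem terms.\<close>

section \<open>Syntax and semantics\<close>

lemma finite_fv_trm: "finite (fv_trm t)"
  by (induction t) auto

lemma finite_fv: "finite (fv p)"
  by (induction p) (auto simp: finite_fv_trm)

lemma eval_cong: "(\<And>v. v \<in> fv_trm t \<Longrightarrow> e v = e' v) \<Longrightarrow> eval M e t = eval M e' t"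
proof (induction t)
  case (Fn f ts)
  have "eval M e t = eval M e' t" if "t \<in> set ts" for t
    using that Fn.prems by (intro Fn.IH) auto
  then have "map (eval M e) ts = map (eval M e') ts" by simp
  then show ?case by (simp only: eval.simps)
qed simp

lemma sat_cong: "(\<And>v. v \<in> fv p \<Longrightarrow> e v = e' v) \<Longrightarrow> sat M e p = sat M e' p"
proof (induction p arbitrary: e e')
  case (Eq s t)
  have "eval M e s = eval M e' s" "eval M e t = eval M e' t"
    using Eq.prems by (intro eval_cong; simp)+
  then show ?case by (simp only: sat.simps)
next
  case (Rel r ts)
  have "eval M e t = eval M e' t" if "t \<in> set ts" for t
    using Rel.prems that by (intro eval_cong) auto
  then have "map (eval M e) ts = map (eval M e') ts" by simp
  then show ?case by (simp only: sat.simps)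
next
  case (Neg p)
  have "sat M e p = sat M e' p" using Neg.prems by (intro Neg.IH) simp
  then show ?case by (simp only: sat.simps)
next
  case (Conj p q)
  have "sat M e p = sat M e' p" "sat M e q = sat M e' q"
    using Conj.prems by (intro Conj.IH; simp)+
  then show ?case by (simp only: sat.simps)
next
  case (Ex x p)
  have "sat M (e(x := a)) p = sat M (e'(x := a)) p" for a
    using Ex.prems by (intro Ex.IH) auto
  then show ?case by (simp only: sat.simps)
qed

text \<open>Unlike \<open>\<lambda>i. xs ! i\<close>, the environment \<open>list_env z xs\<close> has a specified value
  beyond the end of the tuple, so it can be kept inside the universe.\<close>

definition list_env :: "'a \<Rightarrow> 'a list \<Rightarrow> nat \<Rightarrow> 'a" where
  "list_env z xs i = (if i < length xs then xs ! i else z)"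

lemma list_env_map: "(\<lambda>v. list_env z xs v P) = list_env (z P) (map (\<lambda>x. x P) xs)"
  by (auto simp: list_env_def)

lemma same_type_list_env:
  "same_type M D xs ys \<longleftrightarrow> length xs = length ys \<and>
     (\<forall>p \<in> D. fv p \<subseteq> {..<length xs} \<longrightarrow> (sat M (list_env z xs) p \<longleftrightarrow> sat M (list_env z ys) p))"
proof -
  have "sat M (\<lambda>i. xs ! i) p = sat M (list_env z xs) p \<and> sat M (\<lambda>i. ys ! i) p = sat M (list_env z ys) p"
    if "fv p \<subseteq> {..<length xs}" "length xs = length ys" for p
    using that by (intro conjI sat_cong) (auto simp: list_env_def)
  then show ?thesis unfolding same_type_def by metis
qed

lemma same_type_refl: "same_type M D xs xs"
  unfolding same_type_def by simp

lemma same_type_sat: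
  "same_type M D xs ys \<Longrightarrow> p \<in> D \<Longrightarrow> fv p \<subseteq> {..<length xs} \<Longrightarrow>
    sat M (\<lambda>i. xs ! i) p \<longleftrightarrow> sat M (\<lambda>i. ys ! i) p"
  unfolding same_type_def by blast

lemma same_type_iff_singletons:
  "same_type M D xs ys \<longleftrightarrow> length xs = length ys \<and> (\<forall>p \<in> D. same_type M {p} xs ys)"
  unfolding same_type_def by blast

fun subst_trm :: "(nat \<Rightarrow> 'f trm) \<Rightarrow> 'f trm \<Rightarrow> 'f trm" where
  "subst_trm s (Var v) = s v"
| "subst_trm s (Fn f ts) = Fn f (map (subst_trm s) ts)"

lemma eval_subst_trm: "eval M e (subst_trm s t) = eval M (\<lambda>v. eval M e (s v)) t"
proof (induction t)
  case (Fn f ts)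
  then have "map (eval M e) (map (subst_trm s) ts) = map (eval M (\<lambda>v. eval M e (s v))) ts"
    by simp
  then show ?case by (simp only: subst_trm.simps eval.simps)
qed simp

lemma infinite_UNIV_fm: "infinite (UNIV :: ('f, 'r) fm set)"
proof -
  have "inj (\<lambda>i. Eq (Var i) (Var i) :: ('f, 'r) fm)" by (auto intro: injI)
  then show ?thesis using infinite_iff_countable_subset by blast
qed

text \<open>Unlike \<^const>\<open>is_structure\<close>, closure is required for argument lists of every length,
  so that also ill-formed terms evaluate inside the universe.\<close>

definition fn_closed :: "('a, 'f, 'r) struct \<Rightarrow> bool" where
  "fn_closed S \<longleftrightarrow> dom S \<noteq> {} \<and> (\<forall>f as. set as \<subseteq> dom S \<longrightarrow> fnI S f as \<in> dom S)"

lemma fn_closed_is_structure: "fn_closed S \<Longrightarrow> is_structure arf S"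
  unfolding fn_closed_def is_structure_def by blast

lemma eval_in_dom: "fn_closed S \<Longrightarrow> range e \<subseteq> dom S \<Longrightarrow> eval S e t \<in> dom S"
proof (induction t)
  case (Fn f ts)
  then have "set (map (eval S e) ts) \<subseteq> dom S" by auto
  then show ?case using Fn.prems(1) unfolding fn_closed_def by simp
qed auto

lemma eval_comp_hom:
  assumes "fn_closed S" "range e \<subseteq> dom S"
    and hom: "\<And>f as. set as \<subseteq> dom S \<Longrightarrow> h (fnI S f as) = fnI S f (map h as)"
  shows "eval S (h \<circ> e) t = h (eval S e t)"
proof (induction t)
  case (Fn f ts)
  have "set (map (eval S e) ts) \<subseteq> dom S" using eval_in_dom[OF assms(1,2)] by auto
  then have "h (fnI S f (map (eval S e) ts)) = fnI S f (map h (map (eval S e) ts))" by (rule hom)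
  moreover have "map (eval S (h \<circ> e)) ts = map h (map (eval S e) ts)" using Fn by (simp add: comp_def)
  ultimately show ?case by (simp only: eval.simps)
qed simp

lemma sat_comp_hom:
  assumes "fn_closed S" and bij: "bij_betw h (dom S) (dom S)"
    and hom_fn: "\<And>f as. set as \<subseteq> dom S \<Longrightarrow> h (fnI S f as) = fnI S f (map h as)"
    and hom_rel: "\<And>r as. set as \<subseteq> dom S \<Longrightarrow> relI S r (map h as) = relI S r as"
  shows "range e \<subseteq> dom S \<Longrightarrow> sat S (h \<circ> e) p = sat S e p"
proof (induction p arbitrary: e)
  case (Eq s t)
  have "inj_on h (dom S)" using bij bij_betw_def by blast
  then show ?case
    using eval_comp_hom[OF assms(1) Eq hom_fn] eval_in_dom[OF assms(1) Eq]
    by (simp add: inj_on_eq_iff del: comp_apply)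
next
  case (Rel r ts)
  have "set (map (eval S e) ts) \<subseteq> dom S" using eval_in_dom[OF assms(1) Rel] by auto
  moreover have "map (eval S (h \<circ> e)) ts = map h (map (eval S e) ts)"
    using eval_comp_hom[OF assms(1) Rel hom_fn] by auto
  ultimately show ?case using hom_rel[of "map (eval S e) ts"] by (simp only: sat.simps)
next
  case (Ex x p)
  have upd: "(h \<circ> e)(x := h b) = h \<circ> (e(x := b))" for b by auto
  have "h ` dom S = dom S" using bij by (simp add: bij_betw_def)
  then have bex_dom: "(\<exists>a \<in> dom S. Q a) \<longleftrightarrow> (\<exists>b \<in> dom S. Q (h b))" for Q
    by (metis image_iff)
  have "sat S (h \<circ> e) (Ex x p) \<longleftrightarrow> (\<exists>b \<in> dom S. sat S ((h \<circ> e)(x := h b)) p)"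
    using bex_dom[of "\<lambda>a. sat S ((h \<circ> e)(x := a)) p"] by (simp only: sat.simps)
  also have "\<dots> \<longleftrightarrow> (\<exists>b \<in> dom S. sat S (e(x := b)) p)"
    unfolding upd using Ex by (intro bex_cong refl Ex.IH) auto
  finally show ?case by (simp only: sat.simps)
next
  case (Neg p)
  then show ?case by (simp only: sat.simps)
next
  case (Conj p q)
  then show ?case by (simp only: sat.simps)
qed

section \<open>Ultrafilters\<close>

definition is_ultrafilter :: "'i filter \<Rightarrow> bool" where
  "is_ultrafilter U \<longleftrightarrow> U \<noteq> bot \<and> (\<forall>P. eventually P U \<or> eventually (\<lambda>x. \<not> P x) U)"

lemma ultrafilter_eventually_not: "is_ultrafilter U \<Longrightarrow> eventually (\<lambda>x. \<not> P x) U \<longleftrightarrow> \<not> eventually P U"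
proof
  assume "is_ultrafilter U" and not_P: "eventually (\<lambda>x. \<not> P x) U"
  show "\<not> eventually P U"
  proof
    assume "eventually P U"
    with not_P have "eventually (\<lambda>x. False) U" by (rule eventually_elim2) auto
    with \<open>is_ultrafilter U\<close> show False by (simp add: is_ultrafilter_def)
  qed
qed (auto simp: is_ultrafilter_def)

lemma ultrafilter_eventually_iff:
  assumes "is_ultrafilter U"
  shows "eventually (\<lambda>x. P x \<longleftrightarrow> Q x) U \<longleftrightarrow> (eventually P U \<longleftrightarrow> eventually Q U)"
proof
  assume "eventually (\<lambda>x. P x \<longleftrightarrow> Q x) U"
  then show "eventually P U \<longleftrightarrow> eventually Q U"
    by (auto elim: eventually_elim2)
next
  assume iff: "eventually P U \<longleftrightarrow> eventually Q U"
  show "eventually (\<lambda>x. P x \<longleftrightarrow> Q x) U"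
  proof (cases "eventually P U")
    case True
    with iff have "eventually Q U" by blast
    with True show ?thesis by (rule eventually_elim2) auto
  next
    case False
    with iff assms have "eventually (\<lambda>x. \<not> P x) U" "eventually (\<lambda>x. \<not> Q x) U"
      using ultrafilter_eventually_not by blast+
    then show ?thesis by (rule eventually_elim2) auto
  qed
qed

lemma ultrafilter_eventually_ex_less:
  assumes "is_ultrafilter U"
  shows "eventually (\<lambda>x. \<exists>k < (N::nat). P k x) U \<Longrightarrow> \<exists>k < N. eventually (P k) U"
proof (induction N)
  case 0
  then show ?case using assms by (simp add: is_ultrafilter_def)
next
  case (Suc N)
  show ?case
  proof (cases "eventually (P N) U")
    case False
    then have "eventually (\<lambda>x. \<not> P N x) U" using assms ultrafilter_eventually_not by blast
    then have "eventually (\<lambda>x. \<exists>k < N. P k x) U"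
      using Suc.prems by (rule eventually_elim2) (auto simp: less_Suc_eq)
    then show ?thesis using Suc.IH less_Suc_eq by blast
  qed auto
qed

lemma Inf_chain_proper_filters:
  fixes F :: "'a filter"
  assumes C: "C \<in> Chains {(b, a). a \<noteq> bot \<and> a \<le> b \<and> b \<le> F}" and "C \<noteq> {}"
  shows "Inf C \<noteq> bot" "Inf C \<le> F"
proof -
  from assms have "Inf C = bot \<longleftrightarrow> (\<exists>x \<in> C. x = bot)"
    unfolding trivial_limit_def by (intro eventually_Inf_base) (auto simp: Chains_def)
  with C show "Inf C \<noteq> bot" by (auto simp: Chains_def)
  from \<open>C \<noteq> {}\<close> obtain x where "x \<in> C" by auto
  with C show "Inf C \<le> F" by (auto intro!: Inf_lower2[of x] simp: Chains_def)
qed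

lemma ex_ultrafilter_le:
  fixes F :: "'a filter"
  assumes "F \<noteq> bot"
  shows "\<exists>U \<le> F. is_ultrafilter U"
proof -
  let ?R = "{(b, a). a \<noteq> bot \<and> a \<le> b \<and> b \<le> F}"
  have Field_R [simp]: "Field ?R = {G. G \<noteq> bot \<and> G \<le> F}"
    by (auto simp: Field_def bot_unique)
  have "\<exists>m \<in> Field ?R. \<forall>a \<in> Field ?R. (m, a) \<in> ?R \<longrightarrow> a = m"
  proof (rule Zorns_po_lemma)
    show "Partial_order ?R"
      by (auto simp: partial_order_on_def preorder_on_def
          antisym_def refl_on_def trans_def Field_def bot_unique)
    show "\<exists>u \<in> Field ?R. \<forall>a \<in> C. (a, u) \<in> ?R" if C: "C \<in> Chains ?R" for C
    proof (simp, intro exI conjI ballI)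
      have Inf_C: "Inf C \<noteq> bot" "Inf C \<le> F" if "C \<noteq> {}"
        using Inf_chain_proper_filters[OF C that] by blast+
      then have inf_F_C [simp]: "inf F (Inf C) = (if C = {} then F else Inf C)"
        using C by (auto simp add: inf_absorb2)
      from C show "inf F (Inf C) \<noteq> bot"
        by (simp add: assms Inf_C)
      from C show "inf F (Inf C) \<le> F"
        by (simp add: Chains_def Inf_C assms)
      with C show "inf F (Inf C) \<le> x" "x \<le> F" if "x \<in> C" for x
        using that by (auto intro: Inf_lower simp: Chains_def)
    qed
  qed
  then obtain U where U: "U \<noteq> bot" "U \<le> F"
    and maximal: "\<And>G. G \<noteq> bot \<Longrightarrow> G \<le> U \<Longrightarrow> G = U"
    by auto
  have "is_ultrafilter U" unfolding is_ultrafilter_def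
  proof (intro conjI allI U(1) disjCI)
    fix P assume "\<not> eventually (\<lambda>x. \<not> P x) U"
    then have "inf U (principal {x. P x}) \<noteq> bot"
      by (simp add: trivial_limit_def eventually_inf_principal)
    then have U_eq: "U = inf U (principal {x. P x})" by (rule maximal[symmetric]) simp
    show "eventually P U"
      by (subst U_eq) (simp add: eventually_inf_principal)
  qed
  with U show ?thesis by auto
qed

definition finite_supsets :: "'a set filter" where
  "finite_supsets = (INF X \<in> {X. finite X}. principal {Y. finite Y \<and> X \<subseteq> Y})"

lemma eventually_finite_supsets:
  "eventually P finite_supsets \<longleftrightarrow> (\<exists>X. finite X \<and> (\<forall>Y. finite Y \<and> X \<subseteq> Y \<longrightarrow> P Y))"
proof -
  have "eventually P finite_supsets \<longleftrightarrow>
      (\<exists>X \<in> {X. finite X}. eventually P (principal {Y. finite Y \<and> X \<subseteq> Y}))"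
    unfolding finite_supsets_def
  proof (rule eventually_INF_base)
    fix X1 X2 :: "'a set" assume "X1 \<in> {X. finite X}" "X2 \<in> {X. finite X}"
    then show "\<exists>X \<in> {X. finite X}. principal {Y. finite Y \<and> X \<subseteq> Y} \<le>
        inf (principal {Y. finite Y \<and> X1 \<subseteq> Y}) (principal {Y. finite Y \<and> X2 \<subseteq> Y})"
      by (intro bexI[of _ "X1 \<union> X2"]) (auto simp: inf_principal)
  qed auto
  then show ?thesis by (auto simp: eventually_principal)
qed

lemma finite_supsets_ne_bot: "finite_supsets \<noteq> bot"
  unfolding trivial_limit_def eventually_finite_supsets by blast

lemma eventually_finite_supsets_card:
  assumes "infinite (UNIV :: 'a set)" "finite X"
  shows "eventually (\<lambda>Y :: 'a set. finite Y \<and> X \<subseteq> Y \<and> k \<le> card Y) finite_supsets"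
proof -
  obtain Z :: "'a set" where "finite Z" "card Z = k"
    using infinite_arbitrarily_large[OF assms(1)] by blast
  then show ?thesis unfolding eventually_finite_supsets
    by (intro exI[of _ "X \<union> Z"]) (auto simp: assms(2) intro: card_mono order_trans)
qed

section \<open>Ultraproducts and the theorem of Los\<close>

definition uprod_carrier :: "('a, 'f, 'r) struct \<Rightarrow> ('i \<Rightarrow> 'a) set" where
  "uprod_carrier M = {x. \<forall>i. x i \<in> dom M}"

text \<open>The ultraproduct is realised on chosen representatives of the classes of
  \<open>U\<close>-almost equality, so that its equality is the equality of HOL.\<close>

definition uprod_rep :: "('a, 'f, 'r) struct \<Rightarrow> 'i filter \<Rightarrow> ('i \<Rightarrow> 'a) \<Rightarrow> 'i \<Rightarrow> 'a" where
  "uprod_rep M U x = (SOME y. y \<in> uprod_carrier M \<and> eventually (\<lambda>i. y i = x i) U)"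

definition ultraprod :: "('a, 'f, 'r) struct \<Rightarrow> 'i filter \<Rightarrow> ('i \<Rightarrow> 'a, 'f, 'r) struct" where
  "ultraprod M U = \<lparr>dom = uprod_rep M U ` uprod_carrier M,
     fnI = \<lambda>f as. uprod_rep M U (\<lambda>i. fnI M f (map (\<lambda>a. a i) as)),
     relI = \<lambda>r as. eventually (\<lambda>i. relI M r (map (\<lambda>a. a i) as)) U\<rparr>"

lemma uprod_rep:
  assumes "x \<in> uprod_carrier M"
  shows "uprod_rep M U x \<in> uprod_carrier M" "eventually (\<lambda>i. uprod_rep M U x i = x i) U"
  using someI[of "\<lambda>y. y \<in> uprod_carrier M \<and> eventually (\<lambda>i. y i = x i) U" x] assms
  unfolding uprod_rep_def by auto

lemma uprod_rep_cong:
  assumes "eventually (\<lambda>i. x i = y i) U"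
  shows "uprod_rep M U x = uprod_rep M U y"
proof -
  have "eventually (\<lambda>i. z i = x i) U \<longleftrightarrow> eventually (\<lambda>i. z i = y i) U" for z
    using assms by (auto elim: eventually_elim2)
  then show ?thesis unfolding uprod_rep_def by simp
qed

lemma uprod_rep_in_dom: "x \<in> uprod_carrier M \<Longrightarrow> uprod_rep M U x \<in> dom (ultraprod M U)"
  unfolding ultraprod_def by auto

lemma dom_ultraprod_subset: "dom (ultraprod M U) \<subseteq> uprod_carrier M"
  unfolding ultraprod_def by (auto intro: uprod_rep(1))

lemma dom_ultraprod_apply: "x \<in> dom (ultraprod M U) \<Longrightarrow> x i \<in> dom M"
  using dom_ultraprod_subset unfolding uprod_carrier_def by blast

lemma uprod_rep_idem: "x \<in> dom (ultraprod M U) \<Longrightarrow> uprod_rep M U x = x"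
proof -
  assume "x \<in> dom (ultraprod M U)"
  then obtain y where y: "y \<in> uprod_carrier M" "x = uprod_rep M U y"
    unfolding ultraprod_def by auto
  then have "eventually (\<lambda>i. x i = y i) U" using uprod_rep(2) by blast
  then show ?thesis using uprod_rep_cong y(2) by metis
qed

lemma ultraprod_eq_iff:
  assumes "x \<in> dom (ultraprod M U)" "y \<in> dom (ultraprod M U)"
  shows "x = y \<longleftrightarrow> eventually (\<lambda>i. x i = y i) U"
proof
  assume "eventually (\<lambda>i. x i = y i) U"
  then have "uprod_rep M U x = uprod_rep M U y" by (rule uprod_rep_cong)
  then show "x = y" using assms uprod_rep_idem by metis
qed simp

lemma fn_closed_ultraprod: "fn_closed M \<Longrightarrow> fn_closed (ultraprod M U)"
proof -
  assume closed: "fn_closed M"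
  then obtain a where "a \<in> dom M" unfolding fn_closed_def by blast
  then have "(\<lambda>i. a) \<in> uprod_carrier M" by (simp add: uprod_carrier_def)
  then have "dom (ultraprod M U) \<noteq> {}" using uprod_rep_in_dom by blast
  moreover have "fnI (ultraprod M U) f as \<in> dom (ultraprod M U)"
    if "set as \<subseteq> dom (ultraprod M U)" for f as
  proof -
    have "set (map (\<lambda>a. a i) as) \<subseteq> dom M" for i
      using that dom_ultraprod_apply[of _ M U i] by auto
    then have "(\<lambda>i. fnI M f (map (\<lambda>a. a i) as)) \<in> uprod_carrier M"
      using closed unfolding fn_closed_def uprod_carrier_def by blast
    then show ?thesis by (simp add: ultraprod_def uprod_rep_in_dom[simplified ultraprod_def])
  qed
  ultimately show ?thesis by (simp add: fn_closed_def)
qed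

lemma eval_ultraprod_eventually:
  assumes "fn_closed M" "range e \<subseteq> dom (ultraprod M U)"
  shows "eventually (\<lambda>i. eval (ultraprod M U) e t i = eval M (\<lambda>v. e v i) t) U"
proof (induction t)
  case (Fn f ts)
  let ?N = "ultraprod M U"
  define x where "x i = fnI M f (map (\<lambda>a. a i) (map (eval ?N e) ts))" for i
  have "set (map (eval ?N e) ts) \<subseteq> dom ?N"
    using eval_in_dom[OF fn_closed_ultraprod[OF assms(1)] assms(2)] by auto
  then have "set (map (\<lambda>a. a i) (map (eval ?N e) ts)) \<subseteq> dom M" for i
    using dom_ultraprod_apply[of _ M U i] by auto
  then have "x \<in> uprod_carrier M"
    using assms(1) unfolding fn_closed_def uprod_carrier_def x_def by blast
  then have "eventually (\<lambda>i. uprod_rep M U x i = x i) U" by (rule uprod_rep(2))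
  moreover have "eventually (\<lambda>i. \<forall>t \<in> set ts. eval ?N e t i = eval M (\<lambda>v. e v i) t) U"
    using Fn by (intro eventually_ball_finite) auto
  ultimately have "eventually (\<lambda>i. uprod_rep M U x i = eval M (\<lambda>v. e v i) (Fn f ts)) U"
  proof (rule eventually_elim2)
    fix i assume "uprod_rep M U x i = x i" "\<forall>t \<in> set ts. eval ?N e t i = eval M (\<lambda>v. e v i) t"
    then show "uprod_rep M U x i = eval M (\<lambda>v. e v i) (Fn f ts)"
      unfolding x_def by (simp cong: map_cong)
  qed
  moreover have "eval ?N e (Fn f ts) = uprod_rep M U x"
    unfolding x_def by (simp add: ultraprod_def)
  ultimately show ?case by simp
qed simp

lemma eval_ultraprod_eq_iff:
  assumes "fn_closed M" "is_ultrafilter U" "range e \<subseteq> dom (ultraprod M U)"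
  shows "eval (ultraprod M U) e s = eval (ultraprod M U) e t \<longleftrightarrow>
    eventually (\<lambda>i. eval M (\<lambda>v. e v i) s = eval M (\<lambda>v. e v i) t) U"
proof -
  let ?N = "ultraprod M U"
  have "eval ?N e s \<in> dom ?N" "eval ?N e t \<in> dom ?N"
    using eval_in_dom[OF fn_closed_ultraprod[OF assms(1)] assms(3)] by auto
  then have "eval ?N e s = eval ?N e t \<longleftrightarrow> eventually (\<lambda>i. eval ?N e s i = eval ?N e t i) U"
    by (rule ultraprod_eq_iff)
  moreover have "eventually (\<lambda>i. (eval ?N e s i = eval ?N e t i) \<longleftrightarrow>
      eval M (\<lambda>v. e v i) s = eval M (\<lambda>v. e v i) t) U"
    using eval_ultraprod_eventually[OF assms(1,3), of s] eval_ultraprod_eventually[OF assms(1,3), of t]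
    by (rule eventually_elim2) simp
  ultimately show ?thesis using ultrafilter_eventually_iff[OF assms(2)] by blast
qed

lemma ultraprod_witness:
  assumes "fn_closed M" "eventually (\<lambda>i. \<exists>b \<in> dom M. Q i b) U"
  shows "\<exists>a \<in> dom (ultraprod M U). eventually (\<lambda>i. Q i (a i)) U"
proof -
  obtain d where d: "d \<in> dom M" using assms(1) unfolding fn_closed_def by blast
  define w where "w i = (if \<exists>b \<in> dom M. Q i b then SOME b. b \<in> dom M \<and> Q i b else d)" for i
  have "w \<in> uprod_carrier M"
    unfolding uprod_carrier_def w_def using d by (auto intro: someI2_ex)
  moreover have "eventually (\<lambda>i. Q i (w i)) U"
    using assms(2) by (rule eventually_mono) (auto simp: w_def intro: someI2_ex)
  ultimately have "eventually (\<lambda>i. Q i (uprod_rep M U w i)) U"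
    by (auto dest: uprod_rep(2)[of _ _ U] elim: eventually_elim2)
  then show ?thesis using uprod_rep_in_dom[OF \<open>w \<in> _\<close>] by blast
qed

theorem sat_ultraprod_iff:
  assumes "fn_closed M" "is_ultrafilter U" "range e \<subseteq> dom (ultraprod M U)"
  shows "sat (ultraprod M U) e p \<longleftrightarrow> eventually (\<lambda>i. sat M (\<lambda>v. e v i) p) U"
  using assms(3)
proof (induction p arbitrary: e)
  case (Eq s t)
  then show ?case using eval_ultraprod_eq_iff[OF assms(1,2) Eq] by simp
next
  case (Rel r ts)
  have "eventually (\<lambda>i. \<forall>t \<in> set ts. eval (ultraprod M U) e t i = eval M (\<lambda>v. e v i) t) U"
    using eval_ultraprod_eventually[OF assms(1) Rel] by (intro eventually_ball_finite) auto
  then have "eventually (\<lambda>i. relI M r (map (\<lambda>a. a i) (map (eval (ultraprod M U) e) ts)) \<longleftrightarrow>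
      sat M (\<lambda>v. e v i) (Rel r ts)) U"
    by (rule eventually_mono) (simp add: comp_def cong: map_cong)
  then show ?case using ultrafilter_eventually_iff[OF assms(2)] by (simp add: ultraprod_def)
next
  case (Neg p)
  then show ?case using ultrafilter_eventually_not[OF assms(2)] by simp
next
  case (Conj p q)
  then show ?case by (simp add: eventually_conj_iff)
next
  case (Ex x p)
  have upd: "(\<lambda>v. (e(x := a)) v i) = (\<lambda>v. e v i)(x := a i)" for a i by auto
  have IH: "sat (ultraprod M U) (e(x := a)) p \<longleftrightarrow>
      eventually (\<lambda>i. sat M ((\<lambda>v. e v i)(x := a i)) p) U" if "a \<in> dom (ultraprod M U)" for a
    unfolding upd[symmetric] using that Ex by (intro Ex.IH) auto
  show ?case
  proof
    assume "sat (ultraprod M U) e (Ex x p)"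
    then obtain a where "a \<in> dom (ultraprod M U)" "sat (ultraprod M U) (e(x := a)) p" by auto
    then have "eventually (\<lambda>i. sat M ((\<lambda>v. e v i)(x := a i)) p) U" using IH by blast
    then show "eventually (\<lambda>i. sat M (\<lambda>v. e v i) (Ex x p)) U"
      by (rule eventually_mono) (use dom_ultraprod_apply[OF \<open>a \<in> _\<close>] in auto)
  next
    assume "eventually (\<lambda>i. sat M (\<lambda>v. e v i) (Ex x p)) U"
    then obtain a where "a \<in> dom (ultraprod M U)"
      "eventually (\<lambda>i. sat M ((\<lambda>v. e v i)(x := a i)) p) U"
      using ultraprod_witness[OF assms(1)] by fastforce
    then show "sat (ultraprod M U) e (Ex x p)" using IH by auto
  qed
qed

section \<open>Indiscernible sequences from Ramsey's theorem\<close>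

text \<open>Variables are read as pairs: variable \<open>var_code l q\<close> stands for the element at
  position \<open>q \<in> \<int>\<close> of the \<open>l\<close>-th sequence.\<close>

definition var_seq :: "nat \<Rightarrow> nat" where
  "var_seq v = fst (prod_decode v)"

definition var_pos :: "nat \<Rightarrow> int" where
  "var_pos v = int_decode (snd (prod_decode v))"

definition var_code :: "nat \<Rightarrow> int \<Rightarrow> nat" where
  "var_code l q = prod_encode (l, int_encode q)"

lemma var_seq_code [simp]: "var_seq (var_code l q) = l"
  and var_pos_code [simp]: "var_pos (var_code l q) = q"
  by (simp_all add: var_seq_def var_pos_def var_code_def)

definition seq_env :: "(nat \<Rightarrow> nat \<Rightarrow> 'a) \<Rightarrow> (int \<Rightarrow> nat) \<Rightarrow> nat \<Rightarrow> 'a" where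
  "seq_env c J v = c (var_seq v) (J (var_pos v))"

definition fm_positions :: "('f, 'r) fm \<Rightarrow> int set" where
  "fm_positions p = var_pos ` fv p"

lemma finite_fm_positions: "finite (fm_positions p)"
  unfolding fm_positions_def using finite_fv by blast

definition homogeneous :: "('a, 'f, 'r) struct \<Rightarrow> (nat \<Rightarrow> nat \<Rightarrow> 'a) \<Rightarrow> ('f, 'r) fm \<Rightarrow> nat set \<Rightarrow> bool" where
  "homogeneous K c p Y \<longleftrightarrow> (\<forall>J J'.
      strict_mono_on (fm_positions p) J \<and> J ` fm_positions p \<subseteq> Y \<and>
      strict_mono_on (fm_positions p) J' \<and> J' ` fm_positions p \<subseteq> Y \<longrightarrow>
      (sat K (seq_env c J) p \<longleftrightarrow> sat K (seq_env c J') p))"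

definition indiscernible :: "('a, 'f, 'r) struct \<Rightarrow> (nat \<Rightarrow> nat \<Rightarrow> 'a) \<Rightarrow> ('f, 'r) fm \<Rightarrow> bool" where
  "indiscernible K c p \<longleftrightarrow> homogeneous K c p UNIV"

lemma homogeneous_subset: "homogeneous K c p Y \<Longrightarrow> Z \<subseteq> Y \<Longrightarrow> homogeneous K c p Z"
  unfolding homogeneous_def by (meson order_trans)

lemma sorted_list_of_set_image_strict_mono:
  fixes J :: "'a::linorder \<Rightarrow> 'b::linorder"
  assumes "finite Q" "strict_mono_on Q J"
  shows "sorted_list_of_set (J ` Q) = map J (sorted_list_of_set Q)"
proof -
  have "inj_on J Q" using assms(2) strict_mono_on_imp_inj_on by blast
  moreover have "sorted_wrt (<) (map J (sorted_list_of_set Q))"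
    unfolding sorted_wrt_map
    using sorted_wrt_mono_rel[of "sorted_list_of_set Q" "(<)" "\<lambda>x y. J x < J y"] assms
    by (simp add: strict_mono_on_def)
  ultimately show ?thesis
    using sorted_list_of_set_unique[of "J ` Q" "map J (sorted_list_of_set Q)"] assms
    by (simp add: card_image)
qed

definition order_iso :: "'a::linorder set \<Rightarrow> 'b::linorder set \<Rightarrow> 'a \<Rightarrow> 'b" where
  "order_iso Q X q = sorted_list_of_set X ! (LEAST k. sorted_list_of_set Q ! k = q)"

lemma order_iso_image:
  assumes "finite Q" "strict_mono_on Q J" "q \<in> Q"
  shows "order_iso Q (J ` Q) q = J q"
proof -
  let ?L = "sorted_list_of_set Q"
  let ?k = "LEAST k. ?L ! k = q"
  obtain k where k: "k < length ?L" "?L ! k = q"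
    using assms by (metis in_set_conv_nth set_sorted_list_of_set)
  then have "?L ! ?k = q" "?k < length ?L"
    using LeastI[of "\<lambda>k. ?L ! k = q"] Least_le[of "\<lambda>k. ?L ! k = q"] by fastforce+
  then show ?thesis
    unfolding order_iso_def sorted_list_of_set_image_strict_mono[OF assms(1,2)] by simp
qed

lemma ex_infinite_homogeneous_subset:
  assumes "infinite Z"
  shows "\<exists>Y \<subseteq> Z. infinite Y \<and> homogeneous K c p Y"
proof -
  let ?Q = "fm_positions p"
  define colour where "colour X = (if sat K (seq_env c (order_iso ?Q X)) p then 1 else 0 :: nat)" for X
  have "\<forall>X. X \<subseteq> Z \<and> finite X \<and> card X = card ?Q \<longrightarrow> colour X < 2"
    by (simp add: colour_def)
  from Ramsey[OF assms this] obtain Y t where Y: "Y \<subseteq> Z" "infinite Y"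
    and monochromatic: "\<forall>X. X \<subseteq> Y \<and> finite X \<and> card X = card ?Q \<longrightarrow> colour X = t"
    by blast
  have "sat K (seq_env c J) p \<longleftrightarrow> t = 1"
    if J: "strict_mono_on ?Q J" "J ` ?Q \<subseteq> Y" for J
  proof -
    have "card (J ` ?Q) = card ?Q"
      using J strict_mono_on_imp_inj_on card_image by blast
    then have "colour (J ` ?Q) = t"
      using monochromatic J finite_imageI[OF finite_fm_positions] by blast
    moreover have "sat K (seq_env c J) p = sat K (seq_env c (order_iso ?Q (J ` ?Q))) p"
      using order_iso_image[OF finite_fm_positions J(1)]
      by (intro sat_cong) (simp add: seq_env_def fm_positions_def)
    ultimately show ?thesis unfolding colour_def by (auto split: if_splits)
  qed
  then have "homogeneous K c p Y"
    unfolding homogeneous_def by (metis (no_types, lifting))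
  with Y show ?thesis by blast
qed

lemma ex_infinite_homogeneous:
  assumes "finite P"
  shows "\<exists>Y. infinite Y \<and> (\<forall>p \<in> P. homogeneous K c p Y)"
  using assms
proof (induction P rule: finite_induct)
  case empty
  show ?case by (intro exI[of _ UNIV]) auto
next
  case (insert p P)
  then obtain Y where Y: "infinite Y" "\<forall>p \<in> P. homogeneous K c p Y" by blast
  then obtain Y' where "Y' \<subseteq> Y" "infinite Y'" "homogeneous K c p Y'"
    using ex_infinite_homogeneous_subset[OF Y(1), of K c p] by blast
  moreover have "\<forall>p \<in> P. homogeneous K c p Y'"
    using Y(2) homogeneous_subset[OF _ \<open>Y' \<subseteq> Y\<close>] by blast
  ultimately show ?case by blast
qed

theorem ex_indiscernible_subseq:
  fixes c :: "nat \<Rightarrow> nat \<Rightarrow> 'a"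
  assumes "finite P"
  shows "\<exists>s. strict_mono s \<and> (\<forall>p \<in> P. indiscernible K (\<lambda>l j. c l (s j)) p)"
proof -
  obtain Y where Y: "infinite Y" "\<forall>p \<in> P. homogeneous K c p Y"
    using ex_infinite_homogeneous[OF assms] by blast
  let ?s = "enumerate Y"
  have "strict_mono ?s" using strict_mono_enumerate[OF Y(1)] .
  have env: "seq_env (\<lambda>l j. c l (?s j)) J = seq_env c (?s \<circ> J)" for J
    by (auto simp: seq_env_def)
  have mono: "strict_mono_on Q (?s \<circ> J)" if "strict_mono_on Q J" for Q :: "int set" and J
    using that \<open>strict_mono ?s\<close> by (auto simp: strict_mono_on_def strict_mono_def)
  have into_Y: "(?s \<circ> J) ` Q \<subseteq> Y" for Q :: "int set" and J :: "int \<Rightarrow> nat"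
    using enumerate_in_set[OF Y(1)] by auto
  have "indiscernible K (\<lambda>l j. c l (?s j)) p" if "p \<in> P" for p
    unfolding indiscernible_def homogeneous_def env
  proof (intro allI impI)
    fix J J' :: "int \<Rightarrow> nat"
    assume "strict_mono_on (fm_positions p) J \<and> J ` fm_positions p \<subseteq> UNIV \<and>
      strict_mono_on (fm_positions p) J' \<and> J' ` fm_positions p \<subseteq> UNIV"
    then have "strict_mono_on (fm_positions p) (?s \<circ> J)" "strict_mono_on (fm_positions p) (?s \<circ> J')"
      using mono by blast+
    moreover have "homogeneous K c p Y" using Y(2) that by blast
    ultimately show "sat K (seq_env c (?s \<circ> J)) p = sat K (seq_env c (?s \<circ> J')) p"
      using into_Y unfolding homogeneous_def by blast
  qed
  with \<open>strict_mono ?s\<close> show ?thesis by blast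
qed

section \<open>Automorphisms and isomorphic copies\<close>

lemma automorphism_id: "is_structure arf S \<Longrightarrow> automorphism arf arr S id"
  unfolding automorphism_def by simp

lemma automorphism_cong:
  assumes aut: "automorphism arf arr S h" and "is_structure arf S"
    and eq: "\<And>x. x \<in> dom S \<Longrightarrow> h x = h' x"
  shows "automorphism arf arr S h'"
  unfolding automorphism_def
proof (intro conjI allI impI)
  show "bij_betw h' (dom S) (dom S)"
    using aut bij_betw_cong[of "dom S" h h'] eq unfolding automorphism_def by simp
next
  fix f as assume as: "length as = arf f \<and> set as \<subseteq> dom S"
  then have "fnI S f as \<in> dom S" using \<open>is_structure arf S\<close> unfolding is_structure_def by blast
  then have "h' (fnI S f as) = h (fnI S f as)" using eq by simp
  also have "\<dots> = fnI S f (map h as)" using aut as unfolding automorphism_def by blast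
  also have "map h as = map h' as" using as eq by auto
  finally show "h' (fnI S f as) = fnI S f (map h' as)" .
next
  fix r as assume as: "length as = arr r \<and> set as \<subseteq> dom S"
  then have "map h as = map h' as" using eq by auto
  moreover have "relI S r as = relI S r (map h as)"
    using aut as unfolding automorphism_def by blast
  ultimately show "relI S r as = relI S r (map h' as)" by (simp only:)
qed

lemma bij_betw_if_invariant:
  assumes bij: "bij_betw f X X" and "B \<subseteq> X" and invariant: "\<And>x. x \<in> X \<Longrightarrow> f x \<in> B \<longleftrightarrow> x \<in> B"
  shows "bij_betw (\<lambda>x. if x \<in> B then f x else x) X X"
proof -
  have "f ` B = B"
  proof
    show "f ` B \<subseteq> B" using invariant \<open>B \<subseteq> X\<close> by blast
    show "B \<subseteq> f ` B"
    proof
      fix y assume "y \<in> B"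
      then obtain x where "x \<in> X" "y = f x" using bij \<open>B \<subseteq> X\<close> unfolding bij_betw_def by blast
      with \<open>y \<in> B\<close> invariant show "y \<in> f ` B" by blast
    qed
  qed
  then have "bij_betw f B B"
    using bij \<open>B \<subseteq> X\<close> unfolding bij_betw_def by (blast intro: inj_on_subset)
  then have "bij_betw (\<lambda>x. if x \<in> B then f x else x) B B"
    using bij_betw_cong[of B f "\<lambda>x. if x \<in> B then f x else x" B] by simp
  moreover have "bij_betw (\<lambda>x. if x \<in> B then f x else x) (X - B) (X - B)"
    using bij_betw_cong[of "X - B" id "\<lambda>x. if x \<in> B then f x else x" "X - B"] by simp
  ultimately have "bij_betw (\<lambda>x. if x \<in> B then f x else x) (B \<union> (X - B)) (B \<union> (X - B))"
    by (rule bij_betw_combine) blast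
  then show ?thesis using \<open>B \<subseteq> X\<close> by (simp add: Un_absorb1)
qed

lemma ex_positions: "set xs \<subseteq> set ys \<Longrightarrow> \<exists>ks. xs = map ((!) ys) ks \<and> (\<forall>i \<in> set ks. i < length ys)"
proof (induction xs)
  case (Cons x xs)
  then obtain ks where "xs = map ((!) ys) ks" "\<forall>i \<in> set ks. i < length ys" by auto
  moreover obtain i where "i < length ys" "x = ys ! i"
    using Cons.prems by (auto simp: in_set_conv_nth)
  ultimately show ?case by (intro exI[of _ "i # ks"]) auto
qed simp

text \<open>Atomic formulas about a tuple are formulas about every tuple extending it.\<close>

lemma automorphismI_same_type:
  fixes S :: "('a, 'f, 'r) struct"
  assumes "is_structure arf S" and bij: "bij_betw h (dom S) (dom S)"
    and types: "\<And>xs. set xs \<subseteq> dom S \<Longrightarrow>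
      \<exists>ys. set ys \<subseteq> dom S \<and> set xs \<subseteq> set ys \<and> same_type S {p. wf_fm arf arr p} ys (map h ys)"
  shows "automorphism arf arr S h"
  unfolding automorphism_def
proof (intro conjI allI impI bij)
  fix f as assume as: "length as = arf f \<and> set as \<subseteq> dom S"
  then have "set (fnI S f as # as) \<subseteq> dom S"
    using \<open>is_structure arf S\<close> unfolding is_structure_def by auto
  then obtain ys where ys: "set ys \<subseteq> dom S" "set (fnI S f as # as) \<subseteq> set ys"
    and type: "same_type S {p. wf_fm arf arr p} ys (map h ys)"
    using types by blast
  obtain ks0 where ks0: "fnI S f as # as = map ((!) ys) ks0" "\<forall>j \<in> set ks0. j < length ys"
    using ex_positions[OF ys(2)] by (elim exE conjE) (rule that)
  then obtain i ks where "ks0 = i # ks" by (cases ks0) auto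
  with ks0 have pos: "fnI S f as = ys ! i" "as = map ((!) ys) ks"
    and bounds: "\<forall>j \<in> set (i # ks). j < length ys"
    by auto
  let ?p = "Eq (Var i) (Fn f (map Var ks)) :: ('f, 'r) fm"
  have "wf_fm arf arr ?p" using as pos by simp
  moreover have "fv ?p \<subseteq> {..<length ys}" using bounds by auto
  ultimately have "sat S (\<lambda>j. ys ! j) ?p \<longleftrightarrow> sat S (\<lambda>j. map h ys ! j) ?p"
    using same_type_sat[OF type] by blast
  moreover have "sat S (\<lambda>j. ys ! j) ?p" using pos by (simp add: comp_def)
  moreover have "map ((!) (map h ys)) ks = map h as" "map h ys ! i = h (fnI S f as)"
    using pos bounds by auto
  ultimately show "h (fnI S f as) = fnI S f (map h as)" by (simp add: comp_def)
next
  fix r as assume as: "length as = arr r \<and> set as \<subseteq> dom S"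
  then obtain ys where ys: "set ys \<subseteq> dom S" "set as \<subseteq> set ys"
    and type: "same_type S {p. wf_fm arf arr p} ys (map h ys)"
    using types by blast
  then obtain ks where pos: "as = map ((!) ys) ks" and bounds: "\<forall>j \<in> set ks. j < length ys"
    using ex_positions by blast
  let ?p = "Rel r (map Var ks) :: ('f, 'r) fm"
  have "wf_fm arf arr ?p" using as pos by simp
  moreover have "fv ?p \<subseteq> {..<length ys}" using bounds by auto
  ultimately have "sat S (\<lambda>j. ys ! j) ?p \<longleftrightarrow> sat S (\<lambda>j. map h ys ! j) ?p"
    using same_type_sat[OF type] by blast
  moreover have "map ((!) (map h ys)) ks = map h as" using pos bounds by auto
  ultimately show "relI S r as = relI S r (map h as)" using pos by (simp add: comp_def)
qed

definition iso_copy :: "('a \<Rightarrow> 'b) \<Rightarrow> ('a, 'f, 'r) struct \<Rightarrow> ('b, 'f, 'r) struct" where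
  "iso_copy \<pi> S = \<lparr>dom = \<pi> ` dom S,
     fnI = \<lambda>f as. \<pi> (fnI S f (map (inv_into (dom S) \<pi>) as)),
     relI = \<lambda>r as. relI S r (map (inv_into (dom S) \<pi>) as)\<rparr>"

lemma iso_copy_simps [simp]:
  "dom (iso_copy \<pi> S) = \<pi> ` dom S"
  "fnI (iso_copy \<pi> S) f as = \<pi> (fnI S f (map (inv_into (dom S) \<pi>) as))"
  "relI (iso_copy \<pi> S) r as = relI S r (map (inv_into (dom S) \<pi>) as)"
  by (simp_all add: iso_copy_def)

lemma eval_iso_copy:
  assumes "inj_on \<pi> (dom S)" "fn_closed S" "range e \<subseteq> dom S"
  shows "eval (iso_copy \<pi> S) (\<pi> \<circ> e) t = \<pi> (eval S e t)"
proof (induction t)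
  case (Fn f ts)
  have "map (inv_into (dom S) \<pi>) (map (eval (iso_copy \<pi> S) (\<pi> \<circ> e)) ts) = map (eval S e) ts"
    using Fn eval_in_dom[OF assms(2,3)] assms(1) by (auto simp: comp_def)
  then show ?case by (simp only: eval.simps iso_copy_simps)
qed simp

lemma sat_iso_copy:
  assumes "inj_on \<pi> (dom S)" "fn_closed S"
  shows "range e \<subseteq> dom S \<Longrightarrow> sat (iso_copy \<pi> S) (\<pi> \<circ> e) p = sat S e p"
proof (induction p arbitrary: e)
  case (Eq s t)
  then show ?case
    using eval_iso_copy[OF assms Eq] eval_in_dom[OF assms(2) Eq] assms(1)
    by (simp add: inj_on_eq_iff del: comp_apply)
next
  case (Rel r ts)
  have "map (inv_into (dom S) \<pi>) (map (eval (iso_copy \<pi> S) (\<pi> \<circ> e)) ts) = map (eval S e) ts"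
    using eval_iso_copy[OF assms Rel] eval_in_dom[OF assms(2) Rel] assms(1) by auto
  then show ?case by (simp only: sat.simps iso_copy_simps)
next
  case (Neg p)
  then show ?case by (simp only: sat.simps)
next
  case (Conj p q)
  then show ?case by (simp only: sat.simps)
next
  case (Ex x p)
  have upd: "(\<pi> \<circ> e)(x := \<pi> b) = \<pi> \<circ> (e(x := b))" for b by auto
  have "sat (iso_copy \<pi> S) (\<pi> \<circ> e) (Ex x p) \<longleftrightarrow>
      (\<exists>b \<in> dom S. sat (iso_copy \<pi> S) ((\<pi> \<circ> e)(x := \<pi> b)) p)"
    by simp
  also have "\<dots> \<longleftrightarrow> (\<exists>b \<in> dom S. sat S (e(x := b)) p)"
    unfolding upd using Ex by (intro bex_cong refl Ex.IH) auto
  finally show ?case by (simp only: sat.simps)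
qed

lemma sat_iso_copy_inv:
  assumes "inj_on \<pi> (dom S)" "fn_closed S" "range e \<subseteq> dom (iso_copy \<pi> S)"
  shows "sat (iso_copy \<pi> S) e p = sat S (inv_into (dom S) \<pi> \<circ> e) p"
proof -
  have e: "e x \<in> \<pi> ` dom S" for x using assms(3) by auto
  then have "range (inv_into (dom S) \<pi> \<circ> e) \<subseteq> dom S"
    by (auto intro: inv_into_into)
  moreover have "\<pi> \<circ> (inv_into (dom S) \<pi> \<circ> e) = e"
    using e by (auto simp: f_inv_into_f)
  ultimately show ?thesis using sat_iso_copy[OF assms(1,2)] by metis
qed

lemma fn_closed_iso_copy:
  assumes "fn_closed S"
  shows "fn_closed (iso_copy \<pi> S)"
proof -
  have "fnI (iso_copy \<pi> S) f as \<in> dom (iso_copy \<pi> S)" if "set as \<subseteq> \<pi> ` dom S" for f as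
  proof -
    have "set (map (inv_into (dom S) \<pi>) as) \<subseteq> dom S" using that by (auto intro: inv_into_into)
    then show ?thesis using assms unfolding fn_closed_def by simp
  qed
  then show ?thesis using assms unfolding fn_closed_def by simp
qed

lemma is_model_iso_copy:
  fixes \<pi> :: "'a \<Rightarrow> 'b"
  assumes "inj_on \<pi> (dom S)" "fn_closed S" "is_model arf arr T S"
  shows "is_model arf arr T (iso_copy \<pi> S)"
  unfolding is_model_def
proof (intro conjI ballI allI impI)
  show "is_structure arf (iso_copy \<pi> S)"
    using fn_closed_iso_copy[OF assms(2)] by (rule fn_closed_is_structure)
  fix p and e :: "nat \<Rightarrow> 'b"
  assume "p \<in> T" "range e \<subseteq> dom (iso_copy \<pi> S)"
  moreover from this(2) have "range (inv_into (dom S) \<pi> \<circ> e) \<subseteq> dom S"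
    by (auto simp: image_subset_iff intro!: inv_into_into)
  ultimately show "sat (iso_copy \<pi> S) e p"
    using assms sat_iso_copy_inv unfolding is_model_def by metis
qed

lemma automorphism_iso_copy:
  assumes inj: "inj_on \<pi> (dom S)" and "fn_closed S" and aut: "automorphism arf arr S h"
  shows "automorphism arf arr (iso_copy \<pi> S) (\<pi> \<circ> h \<circ> inv_into (dom S) \<pi>)"
proof -
  let ?\<iota> = "inv_into (dom S) \<pi>"
  have h: "bij_betw h (dom S) (dom S)" using aut unfolding automorphism_def by blast
  have \<iota>_dom: "set (map ?\<iota> as) \<subseteq> dom S" if "set as \<subseteq> \<pi> ` dom S" for as
    using that by (auto intro: inv_into_into)
  have \<iota>_conj: "map ?\<iota> (map (\<pi> \<circ> h \<circ> ?\<iota>) as) = map h (map ?\<iota> as)"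
    if "set as \<subseteq> \<pi> ` dom S" for as
    using that inj bij_betw_apply[OF h] by (auto intro!: inv_into_f_f inv_into_into)
  show ?thesis
    unfolding automorphism_def
  proof (intro conjI allI impI)
    have "bij_betw \<pi> (dom S) (\<pi> ` dom S)" using inj by (simp add: bij_betw_imageI)
    then show "bij_betw (\<pi> \<circ> h \<circ> ?\<iota>) (dom (iso_copy \<pi> S)) (dom (iso_copy \<pi> S))"
      using bij_betw_trans[OF bij_betw_trans[OF bij_betw_inv_into h]] by (simp add: comp_assoc)
  next
    fix f as assume "length as = arf f \<and> set as \<subseteq> dom (iso_copy \<pi> S)"
    then have as: "length as = arf f" "set as \<subseteq> \<pi> ` dom S" by simp_all
    then have hom: "h (fnI S f (map ?\<iota> as)) = fnI S f (map h (map ?\<iota> as))"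
      and "fnI S f (map ?\<iota> as) \<in> dom S"
      using aut \<iota>_dom[OF as(2)] \<open>fn_closed S\<close> unfolding automorphism_def fn_closed_def by auto
    then have "(\<pi> \<circ> h \<circ> ?\<iota>) (fnI (iso_copy \<pi> S) f as) = \<pi> (h (fnI S f (map ?\<iota> as)))"
      using inj by simp
    also have "\<dots> = \<pi> (fnI S f (map ?\<iota> (map (\<pi> \<circ> h \<circ> ?\<iota>) as)))"
      using hom \<iota>_conj[OF as(2)] by (simp only:)
    finally show "(\<pi> \<circ> h \<circ> ?\<iota>) (fnI (iso_copy \<pi> S) f as) =
        fnI (iso_copy \<pi> S) f (map (\<pi> \<circ> h \<circ> ?\<iota>) as)"
      by simp
  next
    fix r as assume "length as = arr r \<and> set as \<subseteq> dom (iso_copy \<pi> S)"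
    then have as: "length as = arr r" "set as \<subseteq> \<pi> ` dom S" by simp_all
    then have "relI S r (map ?\<iota> as) = relI S r (map h (map ?\<iota> as))"
      using aut \<iota>_dom[OF as(2)] unfolding automorphism_def by auto
    then show "relI (iso_copy \<pi> S) r as = relI (iso_copy \<pi> S) r (map (\<pi> \<circ> h \<circ> ?\<iota>) as)"
      using \<iota>_conj[OF as(2)] by (simp only: iso_copy_simps)
  qed
qed

section \<open>Decompositions\<close>

definition glues_types :: "('a, 'f, 'r) struct \<Rightarrow> nat \<Rightarrow> (nat \<Rightarrow> 'a set)
    \<Rightarrow> ('f, 'r) fm set \<Rightarrow> ('f, 'r) fm set \<Rightarrow> bool" where
  "glues_types M n A \<Delta>2 \<Delta>1 \<longleftrightarrow> (\<forall>a b :: nat \<Rightarrow> 'a list.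
    (\<forall>l<n. set (a l) \<subseteq> A l \<and> set (b l) \<subseteq> A l \<and> same_type M \<Delta>2 (a l) (b l)) \<and> a 0 = b 0
    \<longrightarrow> same_type M \<Delta>1 (concat (map a [0..<n])) (concat (map b [0..<n])))"

definition semi_decomposition :: "('f \<Rightarrow> nat) \<Rightarrow> ('r \<Rightarrow> nat) \<Rightarrow> nat \<Rightarrow> ('a, 'f, 'r) struct
    \<Rightarrow> (nat \<Rightarrow> 'a set) \<Rightarrow> bool" where
  "semi_decomposition arf arr n M A \<longleftrightarrow>
    (\<forall>\<Delta>1. finite \<Delta>1 \<and> (\<forall>p \<in> \<Delta>1. wf_fm arf arr p) \<longrightarrow>
      (\<exists>\<Delta>2. finite \<Delta>2 \<and> (\<forall>p \<in> \<Delta>2. wf_fm arf arr p) \<and> glues_types M n A \<Delta>2 \<Delta>1))"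

lemma semi_decomposable_iff:
  "semi_decomposable TYPE('a) arf arr T \<longleftrightarrow>
    (\<forall>n \<ge> 1. \<exists>(M :: ('a, 'f, 'r) struct) A. is_model arf arr T M \<and> is_partition M n A \<and>
      (\<forall>i<n. infinite (A i)) \<and> semi_decomposition arf arr n M A)"
  unfolding semi_decomposable_def semi_decomposition_def glues_types_def ..

definition pseudo_decomposition :: "('f \<Rightarrow> nat) \<Rightarrow> ('r \<Rightarrow> nat) \<Rightarrow> nat \<Rightarrow> ('a, 'f, 'r) struct
    \<Rightarrow> (nat \<Rightarrow> 'a set) \<Rightarrow> (nat \<Rightarrow> 'a \<Rightarrow> 'a) \<Rightarrow> (nat \<Rightarrow> 'a \<Rightarrow> 'a) \<Rightarrow> bool" where
  "pseudo_decomposition arf arr n M A f1 f2 \<longleftrightarrow>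
    is_partition M n A \<and> (\<forall>i<n. A i \<noteq> {}) \<and>
    (\<forall>i<n. automorphism arf arr M (f1 i) \<and> automorphism arf arr M (f2 i) \<and>
      (\<exists>x \<in> dom M. f1 i x \<noteq> f2 i x) \<and> (\<forall>x \<in> dom M - A i. f1 i x = f2 i x)) \<and>
    (\<forall>S. automorphism arf arr M (glue n A f1 f2 S))"

lemma pseudo_decomposable_iff:
  "pseudo_decomposable TYPE('a) arf arr T \<longleftrightarrow>
    (\<forall>n \<ge> 1. \<exists>(M :: ('a, 'f, 'r) struct) A f1 f2.
      is_model arf arr T M \<and> pseudo_decomposition arf arr n M A f1 f2)"
  unfolding pseudo_decomposable_def pseudo_decomposition_def ..

lemma glue_eq:
  assumes "is_partition M n A" "k < n" "x \<in> A k"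
  shows "glue n A f1 f2 S x = (if k \<in> S then f2 k x else f1 k x)"
proof -
  have "(THE i. i < n \<and> x \<in> A i) = k"
    using assms unfolding is_partition_def by (intro the_equality) auto
  then show ?thesis using assms unfolding glue_def by auto
qed

lemma is_partition_iso_copy:
  assumes inj: "inj_on \<pi> (dom S)" and part: "is_partition S n A"
  shows "is_partition (iso_copy \<pi> S) n (\<lambda>i. \<pi> ` A i)"
proof -
  have A_dom: "A i \<subseteq> dom S" if "i < n" for i
    using that part unfolding is_partition_def by blast
  have "\<pi> ` A i \<inter> \<pi> ` A j = {}" if "i < n" "j < n" "i \<noteq> j" for i j
    using that part inj_on_image_Int[OF inj A_dom[of i] A_dom[of j]]
    unfolding is_partition_def by (metis image_empty)
  moreover have "(\<Union>i<n. \<pi> ` A i) = \<pi> ` dom S"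
    using part unfolding is_partition_def by (metis image_UN)
  ultimately show ?thesis unfolding is_partition_def by simp
qed

lemma glue_iso_copy:
  assumes inj: "inj_on \<pi> (dom S)" and part: "is_partition S n A" and y: "y \<in> dom (iso_copy \<pi> S)"
  defines "\<iota> \<equiv> inv_into (dom S) \<pi>"
  shows "glue n (\<lambda>i. \<pi> ` A i) (\<lambda>i. \<pi> \<circ> f1 i \<circ> \<iota>) (\<lambda>i. \<pi> \<circ> f2 i \<circ> \<iota>) S' y =
    (\<pi> \<circ> glue n A f1 f2 S' \<circ> \<iota>) y"
proof -
  obtain x where x: "x \<in> dom S" "y = \<pi> x" using y by auto
  then obtain k where k: "k < n" "x \<in> A k" using part unfolding is_partition_def by blast
  have "\<iota> y = x" using inj x unfolding \<iota>_def by simp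
  moreover have "y \<in> \<pi> ` A k" using x k by blast
  ultimately show ?thesis
    using glue_eq[OF part k] glue_eq[OF is_partition_iso_copy[OF inj part] k(1)] by simp
qed

lemma pseudo_decomposition_iso_copy:
  assumes inj: "inj_on \<pi> (dom S)" and closed: "fn_closed S"
    and pd: "pseudo_decomposition arf arr n S A f1 f2"
  defines "\<iota> \<equiv> inv_into (dom S) \<pi>"
  shows "pseudo_decomposition arf arr n (iso_copy \<pi> S) (\<lambda>i. \<pi> ` A i)
    (\<lambda>i. \<pi> \<circ> f1 i \<circ> \<iota>) (\<lambda>i. \<pi> \<circ> f2 i \<circ> \<iota>)"
proof -
  have part: "is_partition S n A" using pd unfolding pseudo_decomposition_def by blast
  have \<iota>: "\<iota> (\<pi> x) = x" if "x \<in> dom S" for x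
    using inj that unfolding \<iota>_def by simp
  have aut: "automorphism arf arr S h \<Longrightarrow> automorphism arf arr (iso_copy \<pi> S) (\<pi> \<circ> h \<circ> \<iota>)" for h
    unfolding \<iota>_def using automorphism_iso_copy[OF inj closed] .
  have "automorphism arf arr (iso_copy \<pi> S)
      (glue n (\<lambda>i. \<pi> ` A i) (\<lambda>i. \<pi> \<circ> f1 i \<circ> \<iota>) (\<lambda>i. \<pi> \<circ> f2 i \<circ> \<iota>) S')" for S'
  proof (rule automorphism_cong)
    show "automorphism arf arr (iso_copy \<pi> S) (\<pi> \<circ> glue n A f1 f2 S' \<circ> \<iota>)"
      using pd aut unfolding pseudo_decomposition_def by blast
    show "is_structure arf (iso_copy \<pi> S)"
      using fn_closed_iso_copy[OF closed] by (rule fn_closed_is_structure)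
    show "(\<pi> \<circ> glue n A f1 f2 S' \<circ> \<iota>) y =
        glue n (\<lambda>i. \<pi> ` A i) (\<lambda>i. \<pi> \<circ> f1 i \<circ> \<iota>) (\<lambda>i. \<pi> \<circ> f2 i \<circ> \<iota>) S' y"
      if "y \<in> dom (iso_copy \<pi> S)" for y
      using glue_iso_copy[OF inj part that] unfolding \<iota>_def by simp
  qed
  moreover have "\<exists>y \<in> dom (iso_copy \<pi> S). (\<pi> \<circ> f1 i \<circ> \<iota>) y \<noteq> (\<pi> \<circ> f2 i \<circ> \<iota>) y"
    if i: "i < n" for i
  proof -
    obtain x where "x \<in> dom S" "f1 i x \<noteq> f2 i x"
      using pd i unfolding pseudo_decomposition_def by blast
    moreover have "f1 i x \<in> dom S" "f2 i x \<in> dom S"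
      using pd i \<open>x \<in> dom S\<close> unfolding pseudo_decomposition_def automorphism_def
      by (meson bij_betw_apply)+
    ultimately have "\<pi> (f1 i x) \<noteq> \<pi> (f2 i x)" using inj by (auto simp: inj_on_eq_iff)
    then show ?thesis using \<iota> \<open>x \<in> dom S\<close> by force
  qed
  moreover have "(\<pi> \<circ> f1 i \<circ> \<iota>) y = (\<pi> \<circ> f2 i \<circ> \<iota>) y"
    if i: "i < n" and y: "y \<in> dom (iso_copy \<pi> S) - \<pi> ` A i" for i y
  proof -
    obtain x where "x \<in> dom S - A i" "y = \<pi> x" using y by auto
    then show ?thesis using i pd \<iota> unfolding pseudo_decomposition_def by auto
  qed
  ultimately show ?thesis
    using pd aut is_partition_iso_copy[OF inj part] unfolding pseudo_decomposition_def by auto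
qed

section \<open>Coding terms of the Skolem language by sets of sets\<close>

text \<open>The Skolem function symbols: the original ones, and one for each pair of a
  variable \<open>x\<close> and a formula \<open>p\<close>, naming a witness for \<open>\<exists>x. p\<close>.\<close>

type_synonym ('f, 'r) skolem_sym = "'f + nat \<times> ('f, 'r) fm"

type_synonym ('f, 'r) skolem_fm = "(('f, 'r) skolem_sym, 'r + nat) fm"

datatype 'l rose = Rose 'l "'l rose list"

fun preorder :: "'l rose \<Rightarrow> ('l + nat) list" where
  "preorder (Rose l cs) = Inl l # Inr (length cs) # concat (map preorder cs)"

lemma concat_map_append_inj:
  assumes "\<And>c c' r r'. c \<in> set cs \<Longrightarrow> f c @ r = f c' @ r' \<Longrightarrow> c = c' \<and> r = r'"
    and "length cs = length cs'" "concat (map f cs) @ r = concat (map f cs') @ r'"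
  shows "cs = cs' \<and> r = r'"
  using assms
proof (induction cs arbitrary: cs' r r')
  case (Cons c cs)
  obtain c' cs'' where cs': "cs' = c' # cs''"
    using Cons.prems(2) by (cases cs') auto
  have "f c @ (concat (map f cs) @ r) = f c' @ (concat (map f cs'') @ r')"
    using Cons.prems(3) cs' by simp
  then have "c = c'" and rest: "concat (map f cs) @ r = concat (map f cs'') @ r'"
    using Cons.prems(1)[of c] by auto
  moreover have "length cs = length cs''" using Cons.prems(2) cs' by simp
  moreover have "d = d' \<and> s = s'" if "d \<in> set cs" "f d @ s = f d' @ s'" for d d' s s'
    using that by (intro Cons.prems(1)) simp_all
  ultimately show ?case using Cons.IH cs' by blast
qed simp

lemma preorder_append_inj: "preorder t @ r = preorder t' @ r' \<Longrightarrow> t = t' \<and> r = r'"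
proof (induction t arbitrary: t' r r')
  case (Rose l cs)
  obtain l' cs' where t': "t' = Rose l' cs'" by (cases t')
  with Rose.prems have "l = l'" "length cs = length cs'"
    and "concat (map preorder cs) @ r = concat (map preorder cs') @ r'" by auto
  with Rose.IH have "cs = cs' \<and> r = r'" by (metis concat_map_append_inj)
  with \<open>l = l'\<close> t' show ?case by simp
qed

lemma inj_preorder: "inj preorder"
  using preorder_append_inj[of _ "[]" _ "[]"] by (auto intro: injI)

definition indexed_set :: "'a list \<Rightarrow> (nat \<times> 'a) set" where
  "indexed_set xs = {(i, xs ! i) | i. i < length xs}"

lemma inj_indexed_set: "inj indexed_set"
proof (rule injI)
  fix xs ys :: "'a list" assume eq: "indexed_set xs = indexed_set ys"
  have "fst ` indexed_set xs = {..<length xs}" for xs :: "'a list"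
    unfolding indexed_set_def by force
  with eq have "length xs = length ys" by (metis lessThan_eq_iff)
  moreover have "xs ! i = ys ! i" if "i < length xs" for i
    using that eq unfolding indexed_set_def by auto
  ultimately show "xs = ys" by (rule nth_equalityI)
qed

type_synonym ('a, 'f, 'r) atom = "'a + 'f + 'r + nat"

fun atom_code :: "nat \<times> (('f + 'r + nat) + nat) \<Rightarrow> ('a, 'f, 'r) atom set" where
  "atom_code (i, Inl (Inl f)) = {Inr (Inl f), Inr (Inr (Inr i))}"
| "atom_code (i, Inl (Inr (Inl r))) = {Inr (Inr (Inl r)), Inr (Inr (Inr i))}"
| "atom_code (i, Inl (Inr (Inr m))) = {Inr (Inr (Inr (prod_encode (i, 2 * m))))}"
| "atom_code (i, Inr k) = {Inr (Inr (Inr (prod_encode (i, 2 * k + 1))))}"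

lemma inj_atom_code: "inj (atom_code :: _ \<Rightarrow> ('a, 'f, 'r) atom set)"
proof (rule injI)
  have odd_even: "2 * (m::nat) \<noteq> Suc (2 * k)" for m k by presburger
  fix a b :: "nat \<times> (('f + 'r + nat) + nat)"
  assume "(atom_code a :: ('a, 'f, 'r) atom set) = atom_code b"
  then show "a = b"
    by (cases a rule: atom_code.cases; cases b rule: atom_code.cases)
      (auto simp: doubleton_eq_iff prod_encode_eq odd_even odd_even[symmetric])
qed

fun trm_rose :: "'f trm \<Rightarrow> ('f + 'r + nat) rose" where
  "trm_rose (Var v) = Rose (Inr (Inr v)) []"
| "trm_rose (Fn f ts) = Rose (Inl f) (map trm_rose ts)"

fun fm_rose :: "('f, 'r) fm \<Rightarrow> ('f + 'r + nat) rose" where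
  "fm_rose (Eq s t) = Rose (Inr (Inr 0)) [trm_rose s, trm_rose t]"
| "fm_rose (Rel r ts) = Rose (Inr (Inl r)) (map trm_rose ts)"
| "fm_rose (Neg p) = Rose (Inr (Inr 1)) [fm_rose p]"
| "fm_rose (Conj p q) = Rose (Inr (Inr 2)) [fm_rose p, fm_rose q]"
| "fm_rose (Ex x p) = Rose (Inr (Inr (x + 3))) [fm_rose p]"

fun skolem_trm_rose :: "('f, 'r) skolem_sym trm \<Rightarrow> ('f + 'r + nat) rose" where
  "skolem_trm_rose (Var v) = Rose (Inr (Inr (2 * v))) []"
| "skolem_trm_rose (Fn (Inl f) ts) = Rose (Inl f) (map skolem_trm_rose ts)"
| "skolem_trm_rose (Fn (Inr (x, p)) ts) =
    Rose (Inr (Inr (2 * x + 1))) (fm_rose p # map skolem_trm_rose ts)"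

lemma map_eq_imp_eq: "map f xs = map f ys \<Longrightarrow> (\<forall>x \<in> set xs. \<forall>y. f x = f y \<longrightarrow> x = y) \<Longrightarrow> xs = ys"
proof (induction xs arbitrary: ys)
  case (Cons x xs)
  then show ?case by (cases ys) auto
qed simp

lemma trm_rose_inj: "trm_rose s = trm_rose s' \<Longrightarrow> s = s'"
proof (induction s arbitrary: s')
  case (Var v)
  then show ?case by (cases s') auto
next
  case (Fn f ts)
  then show ?case by (cases s') (auto intro: map_eq_imp_eq)
qed

lemma fm_rose_inj: "fm_rose p = fm_rose p' \<Longrightarrow> p = p'"
proof (induction p arbitrary: p')
  case (Eq s t)
  then show ?case by (cases p') (auto intro: trm_rose_inj)
next
  case (Rel r ts)
  then show ?case by (cases p') (auto intro: map_eq_imp_eq trm_rose_inj)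
next
  case (Neg p)
  then show ?case by (cases p') auto
next
  case (Conj p q)
  then show ?case by (cases p') auto
next
  case (Ex x p)
  then show ?case by (cases p') auto
qed

lemma skolem_trm_rose_inj: "skolem_trm_rose s = skolem_trm_rose s' \<Longrightarrow> s = s'"
proof (induction s arbitrary: s' rule: skolem_trm_rose.induct)
  case (1 v)
  then show ?case by (cases s' rule: skolem_trm_rose.cases) auto
next
  case (2 f ts)
  then show ?case by (cases s' rule: skolem_trm_rose.cases) (auto intro: map_eq_imp_eq)
next
  case (3 x p ts)
  then show ?case by (cases s' rule: skolem_trm_rose.cases) (auto intro: map_eq_imp_eq fm_rose_inj)
qed

definition skolem_trm_code :: "('f, 'r) skolem_sym trm \<Rightarrow> ('a, 'f, 'r) atom set set" where
  "skolem_trm_code t = atom_code ` indexed_set (preorder (skolem_trm_rose t))"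

lemma inj_skolem_trm_code: "inj (skolem_trm_code :: _ \<Rightarrow> ('a, 'f, 'r) atom set set)"
proof (rule injI)
  fix s t :: "('f, 'r) skolem_sym trm"
  assume "(skolem_trm_code s :: ('a, 'f, 'r) atom set set) = skolem_trm_code t"
  then have "indexed_set (preorder (skolem_trm_rose s)) = indexed_set (preorder (skolem_trm_rose t))"
    unfolding skolem_trm_code_def using inj_atom_code inj_image_eq_iff by metis
  then show "s = t"
    using inj_indexed_set inj_preorder skolem_trm_rose_inj by (metis injD)
qed

section \<open>The Ehrenfeucht-Mostowski construction\<close>

definition embed_fm :: "('f, 'r) fm \<Rightarrow> ('f, 'r) skolem_fm" where
  "embed_fm = map_fm Inl Inl"

lemma embed_fm_simps [simp]:
  "embed_fm (Eq s t) = Eq (map_trm Inl s) (map_trm Inl t)"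
  "embed_fm (Rel r ts) = Rel (Inl r) (map (map_trm Inl) ts)"
  "embed_fm (Neg p) = Neg (embed_fm p)"
  "embed_fm (Conj p q) = Conj (embed_fm p) (embed_fm q)"
  "embed_fm (Ex x p) = Ex x (embed_fm p)"
  by (simp_all add: embed_fm_def)

locale semi_decomposed =
  fixes arf :: "'f \<Rightarrow> nat" and arr :: "'r \<Rightarrow> nat" and M :: "('a, 'f, 'r) struct"
    and A :: "nat \<Rightarrow> 'a set" and n :: nat
  assumes n_pos: "1 \<le> n"
    and structure_M: "is_structure arf M"
    and partition: "is_partition M (Suc n) A"
    and infinite_pieces: "\<forall>l < Suc n. infinite (A l)"
    and semi_decomposition: "semi_decomposition arf arr (Suc n) M A"
begin

definition some_elem :: 'a where
  "some_elem = (SOME x. x \<in> dom M)"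

lemma dom_M_ne: "dom M \<noteq> {}"
  using structure_M by (simp add: is_structure_def)

lemma some_elem: "some_elem \<in> dom M"
  unfolding some_elem_def using dom_M_ne by (simp add: some_in_eq)

lemma piece_subset_dom: "l < Suc n \<Longrightarrow> A l \<subseteq> dom M"
  using partition unfolding is_partition_def by blast

lemma ex_piece: "x \<in> dom M \<Longrightarrow> \<exists>l < Suc n. x \<in> A l"
  using partition unfolding is_partition_def by blast

lemma pieces_disjoint: "l < Suc n \<Longrightarrow> l' < Suc n \<Longrightarrow> l \<noteq> l' \<Longrightarrow> A l \<inter> A l' = {}"
  using partition unfolding is_partition_def by blast

text \<open>\<open>M\<close> with its functions extended by a junk value to argument lists of the wrong length,
  so that the ultraproduct of its Skolem expansion is \<^const>\<open>fn_closed\<close>.\<close>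

definition M_tot :: "('a, 'f, 'r) struct" where
  "M_tot = \<lparr>dom = dom M,
     fnI = \<lambda>f as. if length as = arf f \<and> set as \<subseteq> dom M then fnI M f as else some_elem,
     relI = relI M\<rparr>"

lemma M_tot_simps [simp]: "dom M_tot = dom M" "relI M_tot = relI M"
  by (simp_all add: M_tot_def)

lemma fn_closed_M_tot: "fn_closed M_tot"
  using structure_M some_elem dom_M_ne unfolding fn_closed_def M_tot_def is_structure_def by auto

lemma eval_M_tot:
  "wf_trm arf t \<Longrightarrow> range e \<subseteq> dom M \<Longrightarrow> eval M_tot e t = eval M e t \<and> eval M e t \<in> dom M"
proof (induction t)
  case (Fn f ts)
  then have IH: "\<forall>t \<in> set ts. eval M_tot e t = eval M e t \<and> eval M e t \<in> dom M" by auto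
  then have "map (eval M_tot e) ts = map (eval M e) ts" by simp
  then have "eval M_tot e (Fn f ts) = fnI M_tot f (map (eval M e) ts)" by (simp only: eval.simps)
  moreover have args: "set (map (eval M e) ts) \<subseteq> dom M" "length (map (eval M e) ts) = arf f"
    using IH Fn.prems by auto
  then have "fnI M_tot f (map (eval M e) ts) = fnI M f (map (eval M e) ts)"
    by (simp add: M_tot_def)
  moreover have "fnI M f (map (eval M e) ts) \<in> dom M"
    using structure_M args unfolding is_structure_def by blast
  ultimately show ?case by simp
qed auto

lemma sat_M_tot: "wf_fm arf arr p \<Longrightarrow> range e \<subseteq> dom M \<Longrightarrow> sat M_tot e p = sat M e p"
proof (induction p arbitrary: e)
  case (Eq s t)
  then show ?case using eval_M_tot[of s e] eval_M_tot[of t e] by simp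
next
  case (Rel r ts)
  then have "map (eval M_tot e) ts = map (eval M e) ts" using eval_M_tot by auto
  then show ?case by (simp only: sat.simps M_tot_simps)
next
  case (Neg p)
  then show ?case by simp
next
  case (Conj p q)
  then show ?case by simp
next
  case (Ex x p)
  have "sat M_tot (e(x := b)) p = sat M (e(x := b)) p" if "b \<in> dom M" for b
    using Ex that by (intro Ex.IH) auto
  then show ?case by simp
qed

definition skolem_fn :: "nat \<Rightarrow> ('f, 'r) fm \<Rightarrow> 'a list \<Rightarrow> 'a" where
  "skolem_fn x p as = (if \<exists>b \<in> dom M. sat M_tot ((list_env some_elem as)(x := b)) p
     then SOME b. b \<in> dom M \<and> sat M_tot ((list_env some_elem as)(x := b)) p else some_elem)"

lemma skolem_fn_in_dom: "skolem_fn x p as \<in> dom M"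
  unfolding skolem_fn_def using some_elem by (auto intro: someI2_ex)

lemma sat_skolem_fn:
  "\<exists>b \<in> dom M. sat M_tot ((list_env some_elem as)(x := b)) p \<Longrightarrow>
    sat M_tot ((list_env some_elem as)(x := skolem_fn x p as)) p"
  unfolding skolem_fn_def by (auto intro: someI2_ex)

lemma sat_skolem_fn_prefix:
  assumes "insert x (fv p) \<subseteq> {..<K}" "\<exists>b \<in> dom M. sat M_tot (e(x := b)) p"
  shows "sat M_tot (e(x := skolem_fn x p (map e [0..<K]))) p"
proof -
  have "sat M_tot ((list_env some_elem (map e [0..<K]))(x := b)) p \<longleftrightarrow> sat M_tot (e(x := b)) p" for b
    using assms(1) by (intro sat_cong) (auto simp: list_env_def)
  then show ?thesis using sat_skolem_fn[of "map e [0..<K]" x p] assms(2) by simp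
qed

text \<open>The Skolem expansion of \<open>M\<close>, which also names the pieces by the relation
  symbols \<open>Inr l\<close>.\<close>

definition M_sk :: "('a, ('f, 'r) skolem_sym, 'r + nat) struct" where
  "M_sk = \<lparr>dom = dom M,
     fnI = \<lambda>s as. (case s of Inl f \<Rightarrow> fnI M_tot f as | Inr (x, p) \<Rightarrow> skolem_fn x p as),
     relI = \<lambda>s as. (case s of Inl r \<Rightarrow> relI M r as | Inr l \<Rightarrow> (\<exists>y. as = [y] \<and> y \<in> A l))\<rparr>"

lemma M_sk_simps [simp]:
  "dom M_sk = dom M"
  "fnI M_sk (Inl f) = fnI M_tot f"
  "fnI M_sk (Inr (x, p)) = skolem_fn x p"
  "relI M_sk (Inl r) = relI M r"
  "relI M_sk (Inr l) as = (\<exists>y. as = [y] \<and> y \<in> A l)"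
  by (simp_all add: M_sk_def fun_eq_iff)

lemma fn_closed_M_sk: "fn_closed M_sk"
proof -
  have "fnI M_sk s as \<in> dom M" if "set as \<subseteq> dom M" for s as
  proof (cases s)
    case (Inl f)
    then show ?thesis using fn_closed_M_tot that unfolding fn_closed_def by simp
  next
    case (Inr xp)
    then show ?thesis by (cases xp) (simp add: skolem_fn_in_dom)
  qed
  then show ?thesis using dom_M_ne unfolding fn_closed_def by simp
qed

lemma eval_embed: "eval M_sk e (map_trm Inl t) = eval M_tot e t"
proof (induction t)
  case (Fn f ts)
  then have "map (eval M_sk e) (map (map_trm Inl) ts) = map (eval M_tot e) ts" by simp
  then show ?case by (simp only: eval.simps trm.map M_sk_simps)
qed simp

lemma sat_embed: "sat M_sk e (embed_fm p) = sat M_tot e p"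
proof (induction p arbitrary: e)
  case (Rel r ts)
  have "map (eval M_sk e) (map (map_trm Inl) ts) = map (eval M_tot e) ts"
    using eval_embed by simp
  then show ?case by (simp only: sat.simps embed_fm_simps M_sk_simps M_tot_simps)
qed (simp_all add: eval_embed)

text \<open>The ultrapower is indexed by finite sets \<open>P\<close> of Skolem formulas: in coordinate \<open>P\<close>
  the sequences are made indiscernible for the formulas in \<open>P\<close>, and \<open>U\<close>-almost every \<open>P\<close>
  contains any given finite set of formulas.\<close>

definition U :: "('f, 'r) skolem_fm set filter" where
  "U = (SOME U. U \<le> finite_supsets \<and> is_ultrafilter U)"

lemma U: "U \<le> finite_supsets" "is_ultrafilter U"
  using someI_ex[OF ex_ultrafilter_le[OF finite_supsets_ne_bot]] unfolding U_def by auto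

lemma U_ne_bot: "U \<noteq> bot"
  using U(2) is_ultrafilter_def by blast

lemma eventually_U_large:
  "finite X \<Longrightarrow> eventually (\<lambda>P. finite P \<and> X \<subseteq> P \<and> k \<le> card P) U"
  using eventually_finite_supsets_card[OF infinite_UNIV_fm] U(1) filter_leD by blast

text \<open>The sequence with index \<open>l\<close> lives in the piece \<open>A (Suc (l mod n))\<close>; the piece
  \<open>A 0\<close> is left alone, as it is the piece that stays fixed in a semi-decomposition.\<close>

definition piece_seq :: "nat \<Rightarrow> nat \<Rightarrow> 'a" where
  "piece_seq l = (SOME f. inj f \<and> range f \<subseteq> A (Suc (l mod n)))"

lemma piece_seq: "inj (piece_seq l)" "piece_seq l j \<in> A (Suc (l mod n))"
proof -
  have "Suc (l mod n) < Suc n" using n_pos by simp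
  then have "\<exists>f :: nat \<Rightarrow> 'a. inj f \<and> range f \<subseteq> A (Suc (l mod n))"
    using infinite_pieces infinite_countable_subset by blast
  then have "inj (piece_seq l) \<and> range (piece_seq l) \<subseteq> A (Suc (l mod n))"
    unfolding piece_seq_def by (rule someI_ex)
  then show "inj (piece_seq l)" "piece_seq l j \<in> A (Suc (l mod n))" by auto
qed

lemma piece_seq_in_dom: "piece_seq l j \<in> dom M"
proof -
  have "Suc (l mod n) < Suc n" using n_pos by simp
  then show ?thesis using piece_seq(2) piece_subset_dom by blast
qed

definition indisc_subseq :: "('f, 'r) skolem_fm set \<Rightarrow> nat \<Rightarrow> nat" where
  "indisc_subseq P = (SOME s. strict_mono s \<and>
     (finite P \<longrightarrow> (\<forall>p \<in> P. indiscernible M_sk (\<lambda>l j. piece_seq l (s j)) p)))"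

lemma indisc_subseq:
  "strict_mono (indisc_subseq P)"
  "finite P \<Longrightarrow> p \<in> P \<Longrightarrow> indiscernible M_sk (\<lambda>l j. piece_seq l (indisc_subseq P j)) p"
proof -
  have "\<exists>s. strict_mono s \<and> (finite P \<longrightarrow> (\<forall>p \<in> P. indiscernible M_sk (\<lambda>l j. piece_seq l (s j)) p))"
  proof (cases "finite P")
    case True
    then show ?thesis using ex_indiscernible_subseq[OF True, of M_sk piece_seq] by blast
  next
    case False
    then show ?thesis by (intro exI[of _ id]) (simp add: strict_mono_def)
  qed
  then have "strict_mono (indisc_subseq P) \<and>
      (finite P \<longrightarrow> (\<forall>p \<in> P. indiscernible M_sk (\<lambda>l j. piece_seq l (indisc_subseq P j)) p))"
    unfolding indisc_subseq_def by (rule someI_ex)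
  then show "strict_mono (indisc_subseq P)"
    "finite P \<Longrightarrow> p \<in> P \<Longrightarrow> indiscernible M_sk (\<lambda>l j. piece_seq l (indisc_subseq P j)) p"
    by auto
qed

text \<open>Positions are shifted by \<open>card P\<close>, so that once \<open>P\<close> is large enough all
  positions mentioned by a given formula become natural numbers.\<close>

definition gen_coord :: "nat \<Rightarrow> int \<Rightarrow> ('f, 'r) skolem_fm set \<Rightarrow> 'a" where
  "gen_coord l q P = piece_seq l (indisc_subseq P (nat (q + int (card P))))"

abbreviation N :: "(('f, 'r) skolem_fm set \<Rightarrow> 'a, ('f, 'r) skolem_sym, 'r + nat) struct" where
  "N \<equiv> ultraprod M_sk U"

definition gen :: "nat \<Rightarrow> int \<Rightarrow> ('f, 'r) skolem_fm set \<Rightarrow> 'a" where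
  "gen l q = uprod_rep M_sk U (gen_coord l q)"

definition gen_env :: "nat \<Rightarrow> ('f, 'r) skolem_fm set \<Rightarrow> 'a" where
  "gen_env v = gen (var_seq v) (var_pos v)"

definition shift_var :: "nat \<Rightarrow> nat" where
  "shift_var v = var_code (var_seq v) (var_pos v + 1)"

definition unshift_var :: "nat \<Rightarrow> nat" where
  "unshift_var v = var_code (var_seq v) (var_pos v - 1)"

lemma gen_coord_in_carrier: "gen_coord l q \<in> uprod_carrier M_sk"
  unfolding uprod_carrier_def gen_coord_def using piece_seq_in_dom by simp

lemma gen_in_dom: "gen l q \<in> dom N"
  unfolding gen_def using uprod_rep_in_dom[OF gen_coord_in_carrier] .

lemma eventually_gen: "eventually (\<lambda>P. gen l q P = gen_coord l q P) U"
  unfolding gen_def using uprod_rep(2)[OF gen_coord_in_carrier] .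

lemma gen_env_in_dom: "range gen_env \<subseteq> dom N"
  unfolding gen_env_def using gen_in_dom by auto

lemma gen_env_shift_unshift: "(gen_env \<circ> shift_var) \<circ> unshift_var = gen_env"
  by (auto simp: gen_env_def shift_var_def unshift_var_def)

lemma fn_closed_N: "fn_closed N"
  using fn_closed_ultraprod[OF fn_closed_M_sk] .

lemma sat_gen_coord_shift:
  assumes "finite P" "p \<in> P" "\<forall>q \<in> fm_positions p. 0 \<le> q + int (card P)"
  shows "sat M_sk (\<lambda>v. gen_coord (var_seq v) (var_pos v) P) p \<longleftrightarrow>
    sat M_sk (\<lambda>v. gen_coord (var_seq v) (var_pos v + 1) P) p"
proof -
  define J where "J q = nat (q + int (card P))" for q
  define J' where "J' q = nat (q + 1 + int (card P))" for q
  have "strict_mono_on (fm_positions p) J" "strict_mono_on (fm_positions p) J'"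
    using assms(3) by (auto intro!: strict_mono_onI simp: J_def J'_def)
  moreover have "indiscernible M_sk (\<lambda>l j. piece_seq l (indisc_subseq P j)) p"
    using indisc_subseq(2)[OF assms(1,2)] .
  ultimately have "sat M_sk (seq_env (\<lambda>l j. piece_seq l (indisc_subseq P j)) J) p \<longleftrightarrow>
      sat M_sk (seq_env (\<lambda>l j. piece_seq l (indisc_subseq P j)) J') p"
    unfolding indiscernible_def homogeneous_def by blast
  moreover have "seq_env (\<lambda>l j. piece_seq l (indisc_subseq P j)) J =
      (\<lambda>v. gen_coord (var_seq v) (var_pos v) P)"
    "seq_env (\<lambda>l j. piece_seq l (indisc_subseq P j)) J' =
      (\<lambda>v. gen_coord (var_seq v) (var_pos v + 1) P)"
    by (simp_all add: fun_eq_iff seq_env_def gen_coord_def J_def J'_def)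
  ultimately show ?thesis by simp
qed

lemma eventually_sat_gen_env_shift:
  "eventually (\<lambda>P. sat M_sk (\<lambda>v. gen_env v P) p \<longleftrightarrow>
    sat M_sk (\<lambda>v. (gen_env \<circ> shift_var) v P) p) U"
proof -
  define k where "k = nat (Max (insert 0 (uminus ` fm_positions p)))"
  have k: "\<forall>q \<in> fm_positions p. - q \<le> int k"
    unfolding k_def using finite_fm_positions[of p] by (auto intro!: le_nat_iff[THEN iffD2] Max_ge)
  have "eventually (\<lambda>P. finite P \<and> {p} \<subseteq> P \<and> k \<le> card P) U"
    by (rule eventually_U_large) simp
  moreover have "eventually (\<lambda>P. \<forall>v \<in> fv p. gen_env v P = gen_coord (var_seq v) (var_pos v) P
      \<and> (gen_env \<circ> shift_var) v P = gen_coord (var_seq v) (var_pos v + 1) P) U"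
    using eventually_gen
    by (intro eventually_ball_finite[OF finite_fv] ballI eventually_conj)
      (simp_all add: gen_env_def shift_var_def)
  ultimately show ?thesis
  proof (rule eventually_elim2)
    fix P assume P: "finite P \<and> {p} \<subseteq> P \<and> k \<le> card P"
      and coords: "\<forall>v \<in> fv p. gen_env v P = gen_coord (var_seq v) (var_pos v) P
        \<and> (gen_env \<circ> shift_var) v P = gen_coord (var_seq v) (var_pos v + 1) P"
    have "\<forall>q \<in> fm_positions p. 0 \<le> q + int (card P)" using k P by force
    with P have "sat M_sk (\<lambda>v. gen_coord (var_seq v) (var_pos v) P) p \<longleftrightarrow>
        sat M_sk (\<lambda>v. gen_coord (var_seq v) (var_pos v + 1) P) p"
      by (intro sat_gen_coord_shift) auto
    moreover have "sat M_sk (\<lambda>v. gen_env v P) p \<longleftrightarrow>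
        sat M_sk (\<lambda>v. gen_coord (var_seq v) (var_pos v) P) p"
      using coords by (intro sat_cong) simp
    moreover have "sat M_sk (\<lambda>v. (gen_env \<circ> shift_var) v P) p \<longleftrightarrow>
        sat M_sk (\<lambda>v. gen_coord (var_seq v) (var_pos v + 1) P) p"
      using coords by (intro sat_cong) (simp del: comp_apply)
    ultimately show "sat M_sk (\<lambda>v. gen_env v P) p \<longleftrightarrow> sat M_sk (\<lambda>v. (gen_env \<circ> shift_var) v P) p"
      by blast
  qed
qed

lemma sat_gen_env_shift: "sat N gen_env p \<longleftrightarrow> sat N (gen_env \<circ> shift_var) p"
proof -
  have "eventually (\<lambda>P. sat M_sk (\<lambda>v. gen_env v P) p) U \<longleftrightarrow>
      eventually (\<lambda>P. sat M_sk (\<lambda>v. (gen_env \<circ> shift_var) v P) p) U"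
    using eventually_sat_gen_env_shift ultrafilter_eventually_iff[OF U(2)] by blast
  moreover have "range (gen_env \<circ> shift_var) \<subseteq> dom N" using gen_env_in_dom by auto
  ultimately show ?thesis
    using sat_ultraprod_iff[OF fn_closed_M_sk U(2) gen_env_in_dom]
      sat_ultraprod_iff[OF fn_closed_M_sk U(2), of "gen_env \<circ> shift_var"]
    by simp
qed

definition hull :: "(('f, 'r) skolem_fm set \<Rightarrow> 'a) set" where
  "hull = range (eval N gen_env)"

definition term_of :: "(('f, 'r) skolem_fm set \<Rightarrow> 'a) \<Rightarrow> ('f, 'r) skolem_sym trm" where
  "term_of x = (SOME t. x = eval N gen_env t)"

lemma eval_term_of: "x \<in> hull \<Longrightarrow> eval N gen_env (term_of x) = x"
proof -
  assume "x \<in> hull"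
  then have "\<exists>t. x = eval N gen_env t" unfolding hull_def by auto
  then show ?thesis unfolding term_of_def by (metis (mono_tags) someI_ex)
qed

lemma hull_subset_dom: "hull \<subseteq> dom N"
  unfolding hull_def using eval_in_dom[OF fn_closed_N gen_env_in_dom] by auto

lemma hull_apply_in_dom: "x \<in> hull \<Longrightarrow> x P \<in> dom M"
  using hull_subset_dom dom_ultraprod_apply[of x M_sk U P] by auto

lemma gen_env_in_hull: "gen_env v \<in> hull"
  unfolding hull_def by (rule range_eqI[of _ _ "Var v"]) simp

lemma eval_in_hull: "range e \<subseteq> hull \<Longrightarrow> eval N e t \<in> hull"
proof -
  assume "range e \<subseteq> hull"
  then have "e = (\<lambda>v. eval N gen_env (term_of (e v)))"
    by (intro ext eval_term_of[symmetric]) auto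
  then have "eval N e t = eval N gen_env (subst_trm (\<lambda>v. term_of (e v)) t)"
    by (metis eval_subst_trm)
  then show ?thesis unfolding hull_def by simp
qed

lemma fnI_in_hull: "set as \<subseteq> hull \<Longrightarrow> fnI N f as \<in> hull"
proof -
  assume as: "set as \<subseteq> hull"
  let ?e = "list_env (gen_env 0) as"
  have "range ?e \<subseteq> hull" using as gen_env_in_hull by (auto simp: list_env_def)
  moreover have "map ?e [0..<length as] = as" by (rule nth_equalityI) (simp_all add: list_env_def)
  then have "eval N ?e (Fn f (map Var [0..<length as])) = fnI N f as" by (simp add: comp_def)
  ultimately show ?thesis using eval_in_hull by metis
qed

lemma hull_eq_map_eval: "set as \<subseteq> hull \<Longrightarrow> as = map (eval N gen_env) (map term_of as)"
  using eval_term_of by (induction as) auto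

text \<open>The shift of the hull induced by \<open>q \<mapsto> q + 1\<close> on the positions of the generators;
  it is well defined and injective because the shift of the generators preserves equations
  between terms.\<close>

definition shift :: "(('f, 'r) skolem_fm set \<Rightarrow> 'a) \<Rightarrow> _" where
  "shift x = eval N (gen_env \<circ> shift_var) (term_of x)"

lemma eval_shift_eq_iff:
  "eval N (gen_env \<circ> shift_var) t = eval N (gen_env \<circ> shift_var) t' \<longleftrightarrow> eval N gen_env t = eval N gen_env t'"
  using sat_gen_env_shift[of "Eq t t'"] by simp

lemma shift_eval: "shift (eval N gen_env t) = eval N (gen_env \<circ> shift_var) t"
proof -
  have "eval N gen_env (term_of (eval N gen_env t)) = eval N gen_env t"
    by (simp add: eval_term_of hull_def)
  then show ?thesis unfolding shift_def using eval_shift_eq_iff by blast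
qed

lemma eval_gen_env_shift: "eval N (gen_env \<circ> shift_var) t = eval N gen_env (subst_trm (Var \<circ> shift_var) t)"
  by (simp add: eval_subst_trm comp_def)

lemma shift_in_hull: "x \<in> hull \<Longrightarrow> shift x \<in> hull"
  unfolding hull_def using shift_eval eval_gen_env_shift by auto

lemma bij_shift: "bij_betw shift hull hull"
proof (rule bij_betw_imageI)
  show "inj_on shift hull"
    unfolding hull_def using shift_eval eval_shift_eq_iff by (auto intro!: inj_onI)
  have "eval N gen_env t \<in> shift ` hull" for t
  proof -
    have "eval N gen_env t = eval N ((gen_env \<circ> shift_var) \<circ> unshift_var) t"
      using gen_env_shift_unshift by simp
    also have "\<dots> = eval N (gen_env \<circ> shift_var) (subst_trm (Var \<circ> unshift_var) t)"
      by (simp add: eval_subst_trm comp_def)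
    also have "\<dots> = shift (eval N gen_env (subst_trm (Var \<circ> unshift_var) t))"
      by (simp only: shift_eval)
    finally show ?thesis unfolding hull_def by blast
  qed
  then show "shift ` hull = hull" using shift_in_hull unfolding hull_def by blast
qed

lemma shift_fnI: "set as \<subseteq> hull \<Longrightarrow> shift (fnI N f as) = fnI N f (map shift as)"
proof -
  assume "set as \<subseteq> hull"
  then obtain ts where ts: "as = map (eval N gen_env) ts" using hull_eq_map_eval by blast
  have "shift (fnI N f as) = shift (eval N gen_env (Fn f ts))" using ts by simp
  also have "\<dots> = eval N (gen_env \<circ> shift_var) (Fn f ts)" by (rule shift_eval)
  also have "\<dots> = fnI N f (map shift as)" using ts by (simp add: shift_eval comp_def)
  finally show ?thesis .
qed

lemma shift_relI: "set as \<subseteq> hull \<Longrightarrow> relI N r (map shift as) = relI N r as"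
proof -
  assume "set as \<subseteq> hull"
  then obtain ts where ts: "as = map (eval N gen_env) ts" using hull_eq_map_eval by blast
  have "relI N r as = sat N gen_env (Rel r ts)" using ts by simp
  also have "\<dots> = sat N (gen_env \<circ> shift_var) (Rel r ts)" by (rule sat_gen_env_shift)
  also have "\<dots> = relI N r (map shift as)" using ts by (simp add: shift_eval comp_def)
  finally show ?thesis by simp
qed

definition hull_piece :: "nat \<Rightarrow> (('f, 'r) skolem_fm set \<Rightarrow> 'a) set" where
  "hull_piece l = {x \<in> hull. eventually (\<lambda>P. x P \<in> A l) U}"

lemma hull_piece_subset: "hull_piece l \<subseteq> hull"
  unfolding hull_piece_def by auto

lemma shift_in_hull_piece_iff: "x \<in> hull \<Longrightarrow> shift x \<in> hull_piece l \<longleftrightarrow> x \<in> hull_piece l"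
proof -
  assume x: "x \<in> hull"
  have "relI N (Inr l) [x] \<longleftrightarrow> eventually (\<lambda>P. x P \<in> A l) U" for x
    by (simp add: ultraprod_def)
  moreover have "relI N (Inr l) [shift x] = relI N (Inr l) [x]"
    using shift_relI[of "[x]" "Inr l"] x by simp
  ultimately show ?thesis using shift_in_hull[OF x] x unfolding hull_piece_def by auto
qed

lemma ex_hull_piece: "x \<in> hull \<Longrightarrow> \<exists>l < Suc n. x \<in> hull_piece l"
proof -
  assume x: "x \<in> hull"
  have "eventually (\<lambda>P. \<exists>l < Suc n. x P \<in> A l) U"
    using hull_apply_in_dom[OF x] ex_piece by (intro always_eventually) blast
  then have "\<exists>l < Suc n. eventually (\<lambda>P. x P \<in> A l) U"
    by (rule ultrafilter_eventually_ex_less[OF U(2)])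
  then show ?thesis using x unfolding hull_piece_def by blast
qed

lemma hull_piece_unique:
  assumes "x \<in> hull_piece l" "x \<in> hull_piece l'" "l < Suc n" "l' < Suc n"
  shows "l = l'"
proof (rule ccontr)
  assume "l \<noteq> l'"
  then have "A l \<inter> A l' = {}" using pieces_disjoint assms by blast
  moreover have "eventually (\<lambda>P. x P \<in> A l \<and> x P \<in> A l') U"
    using assms unfolding hull_piece_def by (auto intro: eventually_conj)
  ultimately have "eventually (\<lambda>P. False) U" by (auto elim: eventually_mono)
  then show False using U_ne_bot by simp
qed

lemma gen_eq_gen_env: "gen l q = gen_env (var_code l q)"
  by (simp add: gen_env_def)

lemma gen_in_hull_piece: "gen l q \<in> hull_piece (Suc (l mod n))"
proof -
  have "eventually (\<lambda>P. gen l q P \<in> A (Suc (l mod n))) U"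
    using eventually_gen[of l q] by (rule eventually_mono) (simp add: gen_coord_def piece_seq(2))
  then show ?thesis unfolding hull_piece_def using gen_env_in_hull gen_eq_gen_env by simp
qed

lemma shift_gen: "shift (gen l q) = gen l (q + 1)"
  using shift_eval[of "Var (var_code l q)"] by (simp add: gen_eq_gen_env shift_var_def)

lemma gen_0_ne_gen_1: "gen l 0 \<noteq> gen l 1"
proof
  assume "gen l 0 = gen l 1"
  then have "eventually (\<lambda>P. gen_coord l 0 P = gen_coord l 1 P) U"
    using eventually_gen[of l 0] eventually_gen[of l 1] by (auto elim: eventually_elim2)
  moreover have "gen_coord l 0 P \<noteq> gen_coord l 1 P" for P
  proof -
    have "indisc_subseq P (nat (int (card P))) \<noteq> indisc_subseq P (nat (1 + int (card P)))"
      using indisc_subseq(1)[of P] strict_mono_eq by fastforce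
    then show ?thesis unfolding gen_coord_def using piece_seq(1)[of l] by (auto dest: injD)
  qed
  ultimately have "eventually (\<lambda>P. False) U" by (auto elim: eventually_mono)
  then show False using U_ne_bot by simp
qed

text \<open>The hull as a structure in the original language; by the Tarski-Vaught test,
  applied with the Skolem functions, it is an elementary substructure of \<open>N\<close>.\<close>

definition H :: "(('f, 'r) skolem_fm set \<Rightarrow> 'a, 'f, 'r) struct" where
  "H = \<lparr>dom = hull, fnI = \<lambda>f. fnI N (Inl f), relI = \<lambda>r. relI N (Inl r)\<rparr>"

lemma H_simps [simp]: "dom H = hull" "fnI H f = fnI N (Inl f)" "relI H r = relI N (Inl r)"
  by (simp_all add: H_def)

lemma fn_closed_H: "fn_closed H"
  using gen_env_in_hull fnI_in_hull unfolding fn_closed_def by auto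

lemma eval_H: "eval H e t = eval N e (map_trm Inl t)"
proof (induction t)
  case (Fn f ts)
  then have "map (eval H e) ts = map (eval N e) (map (map_trm Inl) ts)" by simp
  then show ?case by (simp only: eval.simps trm.map H_simps)
qed simp

lemma sat_N_embed_iff:
  "range e \<subseteq> dom N \<Longrightarrow> sat N e (embed_fm p) \<longleftrightarrow> eventually (\<lambda>P. sat M_tot (\<lambda>v. e v P) p) U"
  using sat_ultraprod_iff[OF fn_closed_M_sk U(2)] by (simp add: sat_embed)

lemma skolem_witness_in_hull:
  assumes e: "range e \<subseteq> hull" and ex: "sat N e (embed_fm (Ex x p))"
  shows "\<exists>w \<in> hull. sat N (e(x := w)) (embed_fm p)"
proof -
  have e_dom: "range e \<subseteq> dom N" using e hull_subset_dom by blast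
  define K where "K = Suc (Max (insert x (fv p)))"
  have K: "insert x (fv p) \<subseteq> {..<K}"
    unfolding K_def using finite_fv[of p] by (auto simp: less_Suc_eq_le)
  define w where "w = eval N e (Fn (Inr (x, p)) (map Var [0..<K]))"
  have "w \<in> hull" unfolding w_def using eval_in_hull e by blast
  have "eventually (\<lambda>P. sat M_tot (\<lambda>v. e v P) (Ex x p)) U"
    using ex sat_N_embed_iff[OF e_dom, of "Ex x p"] by blast
  then have "eventually (\<lambda>P. \<exists>b \<in> dom M. sat M_tot ((\<lambda>v. e v P)(x := b)) p) U"
    by simp
  moreover have "eventually (\<lambda>P. w P = skolem_fn x p (map (\<lambda>v. e v P) [0..<K])) U"
    using eval_ultraprod_eventually[OF fn_closed_M_sk e_dom, of "Fn (Inr (x, p)) (map Var [0..<K])"]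
    unfolding w_def by (simp add: comp_def)
  ultimately have "eventually (\<lambda>P. sat M_tot ((\<lambda>v. e v P)(x := w P)) p) U"
    by (rule eventually_elim2) (use sat_skolem_fn_prefix[OF K] in auto)
  moreover have "(\<lambda>v. (e(x := w)) v P) = (\<lambda>v. e v P)(x := w P)" for P by auto
  moreover have "range (e(x := w)) \<subseteq> dom N"
    using e_dom \<open>w \<in> hull\<close> hull_subset_dom by auto
  ultimately have "sat N (e(x := w)) (embed_fm p)" using sat_N_embed_iff by simp
  with \<open>w \<in> hull\<close> show ?thesis by blast
qed

lemma sat_H_iff: "range e \<subseteq> hull \<Longrightarrow> sat H e p \<longleftrightarrow> sat N e (embed_fm p)"
proof (induction p arbitrary: e)
  case (Eq s t)
  then show ?case by (simp add: eval_H)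
next
  case (Rel r ts)
  have "map (eval H e) ts = map (eval N e) (map (map_trm Inl) ts)" by (simp add: eval_H)
  then show ?case by (simp only: sat.simps embed_fm_simps H_simps)
next
  case (Neg p)
  then show ?case by simp
next
  case (Conj p q)
  then show ?case by simp
next
  case (Ex x p)
  have IH: "sat H (e(x := a)) p \<longleftrightarrow> sat N (e(x := a)) (embed_fm p)" if "a \<in> hull" for a
    using Ex that by (intro Ex.IH) auto
  show ?case
  proof
    assume "sat H e (Ex x p)"
    then show "sat N e (embed_fm (Ex x p))" using IH hull_subset_dom by auto
  next
    assume "sat N e (embed_fm (Ex x p))"
    then show "sat H e (Ex x p)" using skolem_witness_in_hull[OF Ex.prems] IH by auto
  qed
qed

lemma sat_H_iff_eventually:
  assumes "range e \<subseteq> hull" "wf_fm arf arr p"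
  shows "sat H e p \<longleftrightarrow> eventually (\<lambda>P. sat M (\<lambda>v. e v P) p) U"
proof -
  have "sat M_tot (\<lambda>v. e v P) p \<longleftrightarrow> sat M (\<lambda>v. e v P) p" for P
    using assms hull_apply_in_dom by (intro sat_M_tot) auto
  then show ?thesis
    using sat_H_iff[OF assms(1)] sat_N_embed_iff assms(1) hull_subset_dom by auto
qed

lemma sat_H_shift: "range e \<subseteq> hull \<Longrightarrow> sat H (shift \<circ> e) p = sat H e p"
  by (rule sat_comp_hom[OF fn_closed_H]) (simp_all add: bij_shift shift_fnI shift_relI)

lemma same_type_H_iff_eventually:
  assumes "finite D" "\<forall>p \<in> D. wf_fm arf arr p" "set xs \<subseteq> hull" "set ys \<subseteq> hull"
  shows "same_type H D xs ys \<longleftrightarrow>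
    eventually (\<lambda>P. same_type M D (map (\<lambda>x. x P) xs) (map (\<lambda>x. x P) ys)) U"
proof (cases "length xs = length ys")
  case True
  let ?z = "gen_env 0"
  let ?D = "{p \<in> D. fv p \<subseteq> {..<length xs}}"
  have env: "range (list_env ?z zs) \<subseteq> hull" if "set zs \<subseteq> hull" for zs
    using that gen_env_in_hull by (auto simp: list_env_def)
  have "same_type H D xs ys \<longleftrightarrow> (\<forall>p \<in> ?D. sat H (list_env ?z xs) p \<longleftrightarrow> sat H (list_env ?z ys) p)"
    using True by (auto simp: same_type_list_env[where z = ?z])
  also have "\<dots> \<longleftrightarrow> (\<forall>p \<in> ?D. eventually (\<lambda>P. sat M (list_env (?z P) (map (\<lambda>x. x P) xs)) p \<longleftrightarrow>
      sat M (list_env (?z P) (map (\<lambda>x. x P) ys)) p) U)"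
    using assms(2) sat_H_iff_eventually[OF env[OF assms(3)]] sat_H_iff_eventually[OF env[OF assms(4)]]
      ultrafilter_eventually_iff[OF U(2)] by (simp add: list_env_map)
  also have "\<dots> \<longleftrightarrow> eventually (\<lambda>P. \<forall>p \<in> ?D. sat M (list_env (?z P) (map (\<lambda>x. x P) xs)) p \<longleftrightarrow>
      sat M (list_env (?z P) (map (\<lambda>x. x P) ys)) p) U"
    by (rule eventually_ball_finite_distrib[symmetric]) (use assms(1) in simp)
  also have "\<dots> \<longleftrightarrow> eventually (\<lambda>P. same_type M D (map (\<lambda>x. x P) xs) (map (\<lambda>x. x P) ys)) U"
  proof -
    have "same_type M D (map (\<lambda>x. x P) xs) (map (\<lambda>x. x P) ys) \<longleftrightarrow>
        (\<forall>p \<in> ?D. sat M (list_env (?z P) (map (\<lambda>x. x P) xs)) p \<longleftrightarrow>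
          sat M (list_env (?z P) (map (\<lambda>x. x P) ys)) p)" for P
      using True same_type_list_env[where z = "?z P" and M = M and D = D
          and xs = "map (\<lambda>x. x P) xs" and ys = "map (\<lambda>x. x P) ys"]
      by auto
    then show ?thesis by simp
  qed
  finally show ?thesis .
next
  case False
  then show ?thesis using U_ne_bot by (simp add: same_type_def)
qed

lemma eventually_in_piece:
  "set xs \<subseteq> hull_piece l \<Longrightarrow> eventually (\<lambda>P. set (map (\<lambda>x. x P) xs) \<subseteq> A l) U"
proof -
  assume "set xs \<subseteq> hull_piece l"
  then have "eventually (\<lambda>P. \<forall>x \<in> set xs. x P \<in> A l) U"
    unfolding hull_piece_def by (intro eventually_ball_finite) auto
  then show ?thesis by (simp add: image_subset_iff)
qed

lemma glues_types_H:
  assumes glues: "glues_types M (Suc n) A \<Delta>2 \<Delta>1"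
    and \<Delta>1: "finite \<Delta>1" "\<forall>p \<in> \<Delta>1. wf_fm arf arr p" and \<Delta>2: "finite \<Delta>2" "\<forall>p \<in> \<Delta>2. wf_fm arf arr p"
  shows "glues_types H (Suc n) hull_piece \<Delta>2 \<Delta>1"
  unfolding glues_types_def
proof (intro allI impI)
  fix a b assume ab: "(\<forall>l < Suc n. set (a l) \<subseteq> hull_piece l \<and> set (b l) \<subseteq> hull_piece l \<and>
      same_type H \<Delta>2 (a l) (b l)) \<and> a 0 = b 0"
  then have hull: "set (a l) \<subseteq> hull" "set (b l) \<subseteq> hull" if "l < Suc n" for l
    using that hull_piece_subset by blast+
  let ?a = "\<lambda>P l. map (\<lambda>x. x P) (a l)" and ?b = "\<lambda>P l. map (\<lambda>x. x P) (b l)"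
  have "eventually (\<lambda>P. set (?a P l) \<subseteq> A l \<and> set (?b P l) \<subseteq> A l \<and>
      same_type M \<Delta>2 (?a P l) (?b P l)) U" if "l < Suc n" for l
  proof -
    have "eventually (\<lambda>P. set (?a P l) \<subseteq> A l) U" "eventually (\<lambda>P. set (?b P l) \<subseteq> A l) U"
      using ab that eventually_in_piece by blast+
    moreover have "eventually (\<lambda>P. same_type M \<Delta>2 (?a P l) (?b P l)) U"
      using ab that same_type_H_iff_eventually[OF \<Delta>2 hull[OF that]] by blast
    ultimately show ?thesis by (intro eventually_conj)
  qed
  then have "eventually (\<lambda>P. \<forall>l \<in> {..<Suc n}. set (?a P l) \<subseteq> A l \<and> set (?b P l) \<subseteq> A l \<and>
      same_type M \<Delta>2 (?a P l) (?b P l)) U"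
    by (intro eventually_ball_finite) auto
  then have "eventually (\<lambda>P. same_type M \<Delta>1 (concat (map (?a P) [0..<Suc n]))
      (concat (map (?b P) [0..<Suc n]))) U"
  proof (rule eventually_mono)
    fix P assume "\<forall>l \<in> {..<Suc n}. set (?a P l) \<subseteq> A l \<and> set (?b P l) \<subseteq> A l \<and>
      same_type M \<Delta>2 (?a P l) (?b P l)"
    then show "same_type M \<Delta>1 (concat (map (?a P) [0..<Suc n])) (concat (map (?b P) [0..<Suc n]))"
      using ab by (intro glues[unfolded glues_types_def, rule_format]) auto
  qed
  moreover have "set (concat (map a [0..<Suc n])) \<subseteq> hull" "set (concat (map b [0..<Suc n])) \<subseteq> hull"
    using hull(1)[THEN subsetD] hull(2)[THEN subsetD] by (auto simp del: upt_Suc)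
  ultimately show "same_type H \<Delta>1 (concat (map a [0..<Suc n])) (concat (map b [0..<Suc n]))"
    using same_type_H_iff_eventually \<Delta>1 by (simp add: map_concat comp_def)
qed

lemma semi_decomposition_H: "semi_decomposition arf arr (Suc n) H hull_piece"
  unfolding semi_decomposition_def
proof (intro allI impI)
  fix \<Delta>1 assume \<Delta>1: "finite \<Delta>1 \<and> (\<forall>p \<in> \<Delta>1. wf_fm arf arr p)"
  then obtain \<Delta>2 where "finite \<Delta>2" "\<forall>p \<in> \<Delta>2. wf_fm arf arr p" "glues_types M (Suc n) A \<Delta>2 \<Delta>1"
    using semi_decomposition[unfolded semi_decomposition_def, rule_format, OF \<Delta>1] by blast
  with \<Delta>1 show "\<exists>\<Delta>2. finite \<Delta>2 \<and> (\<forall>p \<in> \<Delta>2. wf_fm arf arr p) \<and> glues_types H (Suc n) hull_piece \<Delta>2 \<Delta>1"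
    using glues_types_H by blast
qed

definition shift_on :: "nat set \<Rightarrow> (('f, 'r) skolem_fm set \<Rightarrow> 'a) \<Rightarrow> _" where
  "shift_on S x = (if \<exists>j < n. j \<in> S \<and> x \<in> hull_piece (Suc j) then shift x else x)"

lemma shift_on_hull_piece:
  assumes "x \<in> hull_piece l" "l < Suc n"
  shows "shift_on S x = (if \<exists>j < n. j \<in> S \<and> l = Suc j then shift x else x)"
proof -
  have "(\<exists>j < n. j \<in> S \<and> x \<in> hull_piece (Suc j)) \<longleftrightarrow> (\<exists>j < n. j \<in> S \<and> l = Suc j)"
  proof
    assume "\<exists>j < n. j \<in> S \<and> x \<in> hull_piece (Suc j)"
    then obtain j where j: "j < n" "j \<in> S" "x \<in> hull_piece (Suc j)" by blast
    then have "l = Suc j" using hull_piece_unique[OF assms(1) j(3) assms(2)] by simp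
    with j show "\<exists>j < n. j \<in> S \<and> l = Suc j" by blast
  qed (use assms(1) in blast)
  then show ?thesis unfolding shift_on_def by simp
qed

lemma shift_on_in_hull_piece_iff: "x \<in> hull \<Longrightarrow> shift_on S x \<in> hull_piece l \<longleftrightarrow> x \<in> hull_piece l"
  unfolding shift_on_def using shift_in_hull_piece_iff by auto

lemma bij_shift_on: "bij_betw (shift_on S) hull hull"
proof -
  let ?B = "{x. \<exists>j < n. j \<in> S \<and> x \<in> hull_piece (Suc j)}"
  have "?B \<subseteq> hull" using hull_piece_subset by blast
  moreover have "shift x \<in> ?B \<longleftrightarrow> x \<in> ?B" if "x \<in> hull" for x
    using shift_in_hull_piece_iff[OF that] by blast
  ultimately have "bij_betw (\<lambda>x. if x \<in> ?B then shift x else x) hull hull"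
    by (rule bij_betw_if_invariant[OF bij_shift])
  then show ?thesis unfolding shift_on_def[abs_def] by simp
qed

lemma same_type_map_shift: "set xs \<subseteq> hull \<Longrightarrow> same_type H D xs (map shift xs)"
  unfolding same_type_list_env[where z = "gen_env 0"]
proof (intro conjI ballI impI)
  fix p :: "('f, 'r) fm"
  assume xs: "set xs \<subseteq> hull" and fv: "fv p \<subseteq> {..<length xs}"
  have "sat H (list_env (gen_env 0) (map shift xs)) p = sat H (shift \<circ> list_env (gen_env 0) xs) p"
    using fv by (intro sat_cong) (auto simp: list_env_def)
  also have "\<dots> = sat H (list_env (gen_env 0) xs) p"
    using xs gen_env_in_hull by (intro sat_H_shift) (auto simp: list_env_def)
  finally show "sat H (list_env (gen_env 0) xs) p = sat H (list_env (gen_env 0) (map shift xs)) p"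
    by simp
qed simp

lemma same_type_shift_on_hull_piece:
  assumes "set xs \<subseteq> hull_piece l" "l < Suc n"
  shows "same_type H D xs (map (shift_on S) xs)"
proof -
  have "map (shift_on S) xs = map (\<lambda>x. if \<exists>j < n. j \<in> S \<and> l = Suc j then shift x else x) xs"
    by (intro map_cong refl) (use assms shift_on_hull_piece[OF _ assms(2), of _ S] in blast)
  moreover have "set xs \<subseteq> hull" using assms(1) hull_piece_subset by blast
  ultimately show ?thesis
    using same_type_map_shift[of xs D] same_type_refl[of H D xs]
    by (cases "\<exists>j < n. j \<in> S \<and> l = Suc j") (simp_all only: if_True if_False map_ident)
qed

text \<open>Sorting a tuple by pieces puts it in the shape required by the semi-decomposition
  of the hull, in which the partial shift acts on each piece either as the identity or
  as the type-preserving shift.\<close>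

lemma same_type_shift_on:
  assumes "set xs \<subseteq> hull"
  shows "\<exists>ys. set ys \<subseteq> hull \<and> set xs \<subseteq> set ys \<and>
    same_type H {p. wf_fm arf arr p} ys (map (shift_on S) ys)"
proof -
  define a where "a l = filter (\<lambda>x. x \<in> hull_piece l) xs" for l
  define b where "b l = map (shift_on S) (a l)" for l
  let ?ys = "concat (map a [0..<Suc n])"
  have a_piece: "set (a l) \<subseteq> hull_piece l" for l by (auto simp: a_def)
  have "set ?ys \<subseteq> hull" using assms by (auto simp: a_def)
  moreover have "set xs \<subseteq> set ?ys"
  proof
    fix x assume x: "x \<in> set xs"
    then obtain l where "l < Suc n" "x \<in> hull_piece l" using ex_hull_piece assms by blast
    then show "x \<in> set ?ys" using x by (auto simp: a_def simp del: upt_Suc)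
  qed
  moreover have "same_type H {p} ?ys (concat (map b [0..<Suc n]))"
    if "wf_fm arf arr p" for p
  proof -
    have single: "finite {p} \<and> (\<forall>q \<in> {p}. wf_fm arf arr q)" using that by simp
    obtain \<Delta>2 where glues: "glues_types H (Suc n) hull_piece \<Delta>2 {p}"
      using semi_decomposition_H[unfolded semi_decomposition_def, rule_format, OF single] by blast
    show ?thesis
    proof (rule glues[unfolded glues_types_def, rule_format], intro conjI allI impI)
      fix l assume l: "l < Suc n"
      show "set (a l) \<subseteq> hull_piece l" by (rule a_piece)
      show "set (b l) \<subseteq> hull_piece l"
        using a_piece shift_on_in_hull_piece_iff hull_piece_subset by (fastforce simp: b_def)
      show "same_type H \<Delta>2 (a l) (b l)"
        unfolding b_def using a_piece l by (rule same_type_shift_on_hull_piece)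
    next
      show "a 0 = b 0"
        unfolding b_def
        by (rule map_idI[symmetric]) (use a_piece[of 0] shift_on_hull_piece[of _ 0 S] in auto)
    qed
  qed
  moreover have "concat (map b [0..<Suc n]) = map (shift_on S) ?ys"
    by (simp add: b_def[abs_def] map_concat comp_def)
  ultimately show ?thesis
    by (intro exI[of _ ?ys]) (auto simp: same_type_iff_singletons[of H "{p. wf_fm arf arr p}"])
qed

lemma automorphism_shift_on: "automorphism arf arr H (shift_on S)"
  using fn_closed_is_structure[OF fn_closed_H] bij_shift_on same_type_shift_on
  by (intro automorphismI_same_type) auto

text \<open>The pieces of the pseudo-decomposition: the fixed piece \<open>hull_piece 0\<close> is merged
  into \<open>hull_piece 1\<close>, so that each block contains a piece moved by the shift.\<close>

definition block :: "nat \<Rightarrow> (('f, 'r) skolem_fm set \<Rightarrow> 'a) set" where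
  "block i = (if i = 0 then hull_piece 0 \<union> hull_piece 1 else hull_piece (Suc i))"

lemma block_subset_hull: "block i \<subseteq> hull"
  unfolding block_def using hull_piece_subset by auto

lemma block_hull_piece:
  assumes "y \<in> block k" "k < n" "y \<in> hull_piece l" "l < Suc n"
  shows "(k = 0 \<and> l \<le> 1) \<or> l = Suc k"
proof (cases "k = 0")
  case True
  then have "y \<in> hull_piece 0 \<or> y \<in> hull_piece 1" using assms(1) by (simp add: block_def)
  then show ?thesis using hull_piece_unique[OF assms(3) _ assms(4)] n_pos True by fastforce
next
  case False
  then have "y \<in> hull_piece (Suc k)" using assms(1) by (simp add: block_def)
  then show ?thesis using hull_piece_unique[OF assms(3) _ assms(4)] assms(2) by simp
qed

lemma ex_block: "y \<in> hull \<Longrightarrow> \<exists>k < n. y \<in> block k"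
proof -
  assume "y \<in> hull"
  then obtain l where l: "l < Suc n" "y \<in> hull_piece l" using ex_hull_piece by blast
  show ?thesis
  proof (cases "l \<le> 1")
    case True
    then have "y \<in> block 0" using l by (auto simp: block_def le_Suc_eq)
    moreover have "0 < n" using n_pos by simp
    ultimately show ?thesis by blast
  next
    case False
    then have "y \<in> block (l - 1)" "l - 1 < n" using l by (auto simp: block_def)
    then show ?thesis by blast
  qed
qed

lemma block_unique: "y \<in> block k \<Longrightarrow> y \<in> block k' \<Longrightarrow> k < n \<Longrightarrow> k' < n \<Longrightarrow> k = k'"
proof -
  assume y: "y \<in> block k" "y \<in> block k'" "k < n" "k' < n"
  then obtain l where l: "l < Suc n" "y \<in> hull_piece l"
    using block_subset_hull ex_hull_piece by blast
  show "k = k'" using block_hull_piece[OF y(1,3) l(2,1)] block_hull_piece[OF y(2,4) l(2,1)] by auto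
qed

lemma shift_on_block:
  assumes "y \<in> block k" "k < n"
  shows "shift_on S y = (if k \<in> S then shift_on {k} y else y)"
proof -
  obtain l where l: "l < Suc n" "y \<in> hull_piece l"
    using assms(1) block_subset_hull ex_hull_piece by blast
  then have "(k = 0 \<and> l \<le> 1) \<or> l = Suc k" using block_hull_piece[OF assms] by blast
  then show ?thesis using shift_on_hull_piece[OF l(2,1)] assms(2) by auto
qed

lemma is_partition_block: "is_partition H n block"
proof -
  have "(\<Union>i<n. block i) = hull"
  proof
    show "(\<Union>i<n. block i) \<subseteq> hull" using block_subset_hull by blast
    show "hull \<subseteq> (\<Union>i<n. block i)" using ex_block by blast
  qed
  then show ?thesis unfolding is_partition_def using block_unique by auto
qed

lemma pseudo_decomposition_H: "pseudo_decomposition arf arr n H block (\<lambda>_. id) (\<lambda>i. shift_on {i})"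
  unfolding pseudo_decomposition_def
proof (intro conjI allI impI is_partition_block)
  fix i assume i: "i < n"
  have "gen i 0 \<in> hull_piece (Suc i)" using gen_in_hull_piece[of i 0] i by simp
  then show "block i \<noteq> {}" by (auto simp: block_def)
  show "automorphism arf arr H id"
    using fn_closed_is_structure[OF fn_closed_H] by (rule automorphism_id)
  show "automorphism arf arr H (shift_on {i})" by (rule automorphism_shift_on)
  have "shift_on {i} (gen i 0) = gen i 1"
    using shift_on_hull_piece[OF \<open>gen i 0 \<in> _\<close>] i shift_gen[of i 0] by simp
  moreover have "gen i 0 \<in> hull" using \<open>gen i 0 \<in> _\<close> hull_piece_subset by blast
  ultimately show "\<exists>x \<in> dom H. id x \<noteq> shift_on {i} x"
    using gen_0_ne_gen_1[of i] by force
  show "\<forall>x \<in> dom H - block i. id x = shift_on {i} x"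
  proof
    fix x assume x: "x \<in> dom H - block i"
    then obtain k where "k < n" "x \<in> block k" using ex_block by auto
    moreover from this x have "k \<noteq> i" by blast
    ultimately show "id x = shift_on {i} x" using shift_on_block[of x k "{i}"] by simp
  qed
next
  fix S
  show "automorphism arf arr H (glue n block (\<lambda>_. id) (\<lambda>i. shift_on {i}) S)"
  proof (rule automorphism_cong[OF automorphism_shift_on fn_closed_is_structure[OF fn_closed_H]])
    fix x assume "x \<in> dom H"
    then obtain k where k: "k < n" "x \<in> block k" using ex_block by (metis H_simps(1))
    then have "glue n block (\<lambda>_. id) (\<lambda>i. shift_on {i}) S x = (if k \<in> S then shift_on {k} x else id x)"
      by (rule glue_eq[OF is_partition_block])
    then show "shift_on S x = glue n block (\<lambda>_. id) (\<lambda>i. shift_on {i}) S x"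
      using shift_on_block[OF k(2,1), of S] by (simp only: id_apply)
  qed
qed

lemma is_model_H:
  assumes "is_model arf arr T M" "\<forall>p \<in> T. wf_fm arf arr p"
  shows "is_model arf arr T H"
  unfolding is_model_def
proof (intro conjI ballI allI impI fn_closed_is_structure[OF fn_closed_H])
  fix p and e :: "nat \<Rightarrow> _" assume "p \<in> T" "range e \<subseteq> dom H"
  moreover have "sat M (\<lambda>v. e v P) p" for P
  proof -
    have "range (\<lambda>v. e v P) \<subseteq> dom M"
      using \<open>range e \<subseteq> dom H\<close> hull_apply_in_dom by auto
    then show ?thesis using assms(1) \<open>p \<in> T\<close> unfolding is_model_def by blast
  qed
  ultimately show "sat H e p" using sat_H_iff_eventually assms(2) by simp
qed

lemma ex_pseudo_decomposition:
  fixes G :: "('a, 'f, 'r) atom set set \<Rightarrow> 'b"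
  assumes "inj G" "is_model arf arr T M" "\<forall>p \<in> T. wf_fm arf arr p"
  shows "\<exists>(M' :: ('b, 'f, 'r) struct) A' f1 f2.
    is_model arf arr T M' \<and> pseudo_decomposition arf arr n M' A' f1 f2"
proof -
  define \<pi> where "\<pi> = G \<circ> skolem_trm_code \<circ> term_of"
  have "inj_on term_of hull" using eval_term_of by (metis inj_onI)
  moreover have "inj (G \<circ> skolem_trm_code)" using assms(1) inj_skolem_trm_code by (rule inj_compose)
  ultimately have "inj_on \<pi> (dom H)"
    unfolding \<pi>_def H_simps by (metis comp_inj_on inj_on_subset top_greatest)
  then show ?thesis
    using is_model_iso_copy[OF _ fn_closed_H is_model_H[OF assms(2,3)]]
      pseudo_decomposition_iso_copy[OF _ fn_closed_H pseudo_decomposition_H]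
    by blast
qed

end

theorem mainTheorem6:
  fixes T :: "('f, 'r) fm set" and arf :: "'f \<Rightarrow> nat" and arr :: "'r \<Rightarrow> nat"
  assumes "fo_theory arf arr T"
    and "semi_decomposable TYPE('a) arf arr T"
    and "\<exists>g :: ('a + 'f + 'r + nat) set set \<Rightarrow> 'b. inj g"
  shows "pseudo_decomposable TYPE('b) arf arr T"
  unfolding pseudo_decomposable_iff
proof (intro allI impI)
  fix n :: nat assume "1 \<le> n"
  obtain G :: "('a + 'f + 'r + nat) set set \<Rightarrow> 'b" where "inj G" using assms(3) by blast
  obtain M :: "('a, 'f, 'r) struct" and A where M: "is_model arf arr T M"
    and "is_partition M (Suc n) A" "\<forall>l < Suc n. infinite (A l)"
    "semi_decomposition arf arr (Suc n) M A"
    using assms(2)[unfolded semi_decomposable_iff, rule_format, of "Suc n"] by auto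
  then interpret semi_decomposed arf arr M A n
    using \<open>1 \<le> n\<close> by unfold_locales (auto simp: is_model_def)
  have "\<forall>p \<in> T. wf_fm arf arr p" using assms(1) by (simp add: fo_theory_def sentence_def)
  then show "\<exists>(M' :: ('b, 'f, 'r) struct) A' f1 f2.
      is_model arf arr T M' \<and> pseudo_decomposition arf arr n M' A' f1 f2"
    using ex_pseudo_decomposition[OF \<open>inj G\<close> M] by blast
qed

end
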